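(* Let $n\ge 3$ and let $f:\mathcal C\to\mathbb C$ be bounded, measurable, with bounded support contained in a bounded set $B\subset\mathbb R^{n+2}$. Then for every $s\in(\frac n2,n)$, $$|M_f(s)|\ll_{s,B}\|f\|_{L^2(\mu_{\mathcal C})}^2,$$ where $M_f=M_{f,f}$.
   Context: Polar coordinates on $\mathcal C=\{x\in\mathbb R^{n+2}:x_1^2+\dots+x_{n+1}^2=x_{n+2}^2,\ x_{n+2}>0\}$: every $x\in\mathcal C$ is uniquely $x=y^{-1}(\omega,1)$ with $y>0$, $\omega\in S^n\subset\mathbb R^{n+1}$; write $f(y,\omega)$ for $f(y^{-1}(\omega,1))$. The measure $\mu_{\mathcal C}$ is $y^{-(n+1)}dy\,d\sigma(\omega)$, with $\sigma$ the rotation-invariant probability on $S^n$. Let $L^2(S^n)=\bigoplus_{d\ge0}\mathcal H_d$ be the decomposition into spaces of spherical harmonics of degree $d$, and $\{\psi_{d,l}\}_l$ an orthonormal basis of $\mathcal H_d$. Set $f_{d,l}(y)=\int_{S^n}f(y,\omega)\overline{\psi_{d,l}(\omega)}\,d\sigma(\omega)$ and, for a function $g$ on $(0,\infty)$, the Mellin transform $\widetilde g(s)=\int_0^\infty g(y)y^{-(s+1)}dy$. For $s\in(\frac n2,n)$ define $P_0(s)=1$, $P_d(s)=\prod_{i=0}^{d-1}\frac{n-s+i}{s+i}$ ($d\ge1$), and for $f,f'$ bounded with bounded support, $M_{f,f'}(s)=\sum_{d,l\ge0}P_d(s)\widetilde{f_{d,l}}(s)\overline{\widetilde{f'_{d,l}}(s)}$.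 *)

theory Defs
  imports "HOL-Analysis.Analysis"
begin

text \<open>The light cone C in R^(n+2) = 'a x real, where 'a is R^(n+1), n = DIM('a) - 1.\<close>
definition lcone :: "('a::euclidean_space \<times> real) set" where
  "lcone = {(v, t). norm v = t \<and> t > 0}"

text \<open>Rotation-invariant probability measure sigma on the unit sphere S^n of 'a:
  the normalized cone (radial-projection) measure of the unit ball.\<close>
definition sph :: "'a::euclidean_space measure" where
  "sph = distr
     (scale_measure (ennreal (1 / measure lborel (ball (0::'a) 1)))
        (restrict_space lborel (ball 0 1 - {0})))
     (restrict_space borel (sphere 0 1)) (\<lambda>x. x /\<^sub>R norm x)"

definition fpol :: "('a::euclidean_space \<times> real \<Rightarrow> complex) \<Rightarrow> real \<Rightarrow> 'a \<Rightarrow> complex" where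
  "fpol f y \<omega> = f ((1 / y) *\<^sub>R \<omega>, 1 / y)"

definition homogeneous_deg :: "nat \<Rightarrow> ('a::real_normed_vector \<Rightarrow> real) \<Rightarrow> bool" where
  "homogeneous_deg d p \<longleftrightarrow> (\<forall>t x. p (t *\<^sub>R x) = t ^ d * p x)"

definition laplacian :: "('a::euclidean_space \<Rightarrow> real) \<Rightarrow> 'a \<Rightarrow> real" where
  "laplacian p x = (\<Sum>b\<in>Basis. deriv (\<lambda>t. deriv (\<lambda>u. p (x + u *\<^sub>R b)) t) 0)"

definition harm_hom_poly :: "nat \<Rightarrow> ('a::euclidean_space \<Rightarrow> real) \<Rightarrow> bool" where
  "harm_hom_poly d p \<longleftrightarrow> real_polynomial_function p \<and> homogeneous_deg d p \<and> (\<forall>x. laplacian p x = 0)"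

text \<open>H_d: (complex) spherical harmonics of degree d, as functions on the sphere
  (values off the sphere are irrelevant).\<close>
definition sph_harm :: "nat \<Rightarrow> ('a::euclidean_space \<Rightarrow> complex) set" where
  "sph_harm d = {h. \<exists>p q. harm_hom_poly d p \<and> harm_hom_poly d q \<and>
                      (\<forall>x\<in>sphere 0 1. h x = Complex (p x) (q x))}"

definition is_sph_onb :: "(nat \<Rightarrow> nat) \<Rightarrow> (nat \<Rightarrow> nat \<Rightarrow> 'a::euclidean_space \<Rightarrow> complex) \<Rightarrow> bool" where
  "is_sph_onb N \<psi> \<longleftrightarrow>
     (\<forall>d. \<forall>l<N d. \<psi> d l \<in> sph_harm d) \<and>
     (\<forall>d. \<forall>l<N d. \<forall>l'<N d. (\<integral>\<omega>. \<psi> d l \<omega> * cnj (\<psi> d l' \<omega>) \<partial>sph) = (if l = l' then 1 else 0)) \<and>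
     (\<forall>d. \<forall>h\<in>sph_harm d. \<exists>c. \<forall>x\<in>sphere 0 1. h x = (\<Sum>l<N d. c l * \<psi> d l x))"

definition fdl :: "(nat \<Rightarrow> nat \<Rightarrow> 'a::euclidean_space \<Rightarrow> complex) \<Rightarrow> ('a \<times> real \<Rightarrow> complex)
    \<Rightarrow> nat \<Rightarrow> nat \<Rightarrow> real \<Rightarrow> complex" where
  "fdl \<psi> f d l y = (\<integral>\<omega>. fpol f y \<omega> * cnj (\<psi> d l \<omega>) \<partial>sph)"

definition mellin :: "(real \<Rightarrow> complex) \<Rightarrow> real \<Rightarrow> complex" where
  "mellin g s = (LINT y:{0<..}|lborel. g y * complex_of_real (y powr (-(s + 1))))"

definition Pd :: "nat \<Rightarrow> nat \<Rightarrow> real \<Rightarrow> real" where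
  "Pd n d s = (\<Prod>i<d. (real n - s + real i) / (s + real i))"

definition Mff :: "(nat \<Rightarrow> nat) \<Rightarrow> (nat \<Rightarrow> nat \<Rightarrow> 'a::euclidean_space \<Rightarrow> complex)
    \<Rightarrow> ('a \<times> real \<Rightarrow> complex) \<Rightarrow> ('a \<times> real \<Rightarrow> complex) \<Rightarrow> real \<Rightarrow> complex" where
  "Mff N \<psi> f f' s = (\<Sum>d. complex_of_real (Pd (DIM('a) - 1) d s) *
       (\<Sum>l<N d. mellin (fdl \<psi> f d l) s * cnj (mellin (fdl \<psi> f' d l) s)))"

text \<open>Squared L^2(mu_C) norm, mu_C = y^-(n+1) dy dsigma.\<close>
definition L2sq_cone :: "('a::euclidean_space \<times> real \<Rightarrow> complex) \<Rightarrow> real" where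
  "L2sq_cone f = (LINT y:{0<..}|lborel.
      (\<integral>\<omega>. (cmod (fpol f y \<omega>))\<^sup>2 \<partial>sph) * y powr (-(real (DIM('a) - 1) + 1)))"

end

theory Submission
  imports Defs
begin

text \<open>
  Expanding \<open>f(y, \<cdot>)\<close> in the orthonormal system \<open>\<psi>\<^sub>d\<^sub>,\<^sub>l\<close>, Bessel's inequality bounds
  \<open>\<Sum>\<^sub>d\<^sub>,\<^sub>l |f\<^sub>d\<^sub>,\<^sub>l(y)|\<^sup>2\<close> by \<open>\<integral> |f(y, \<omega>)|\<^sup>2 d\<sigma>\<close> for every \<open>y\<close>. Bounded support means
  \<open>f(y, \<cdot>) = 0\<close> for \<open>y < 1/R\<close>, so Cauchy-Schwarz against \<open>y\<^bsup>(n+1)/2 - s - 1\<^esup>\<close> on \<open>[1/R, \<infinity>)\<close>,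
  which is square integrable precisely because \<open>s > n/2\<close>, bounds the square of the Mellin
  transform of \<open>f\<^sub>d\<^sub>,\<^sub>l\<close> at \<open>s\<close> by a constant times \<open>\<integral> |f\<^sub>d\<^sub>,\<^sub>l(y)|\<^sup>2 y\<^bsup>-(n+1)\<^esup> dy\<close>. As \<open>0 \<le> P\<^sub>d(s) \<le> 1\<close>, summing gives the bound.

  Bessel needs orthogonality across different degrees. For harmonic homogeneous \<open>u, v\<close> of
  degrees \<open>d \<noteq> e\<close> the field \<open>u \<nabla>v - v \<nabla>u\<close> has divergence \<open>0\<close> and radial component
  \<open>(e - d) u v\<close>; integrating the divergence of \<open>(1 - |x|\<^sup>2)\<^sub>+\<^sup>2 (u \<nabla>v - v \<nabla>u)\<close> gives
  \<open>\<integral>\<^sub>B (1 - |x|\<^sup>2) u v = 0\<close>, and integration in polar coordinates turns this into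
  \<open>\<integral>\<^bsub>S\<^sup>n\<^esub> u v = 0\<close>.
\<close>

section \<open>Derivatives of polynomial functions\<close>

lemma real_polynomial_function_has_polynomial_derivative:
  fixes p :: "'a::euclidean_space \<Rightarrow> real"
  assumes "real_polynomial_function p"
  shows "\<exists>D. (\<forall>x. (p has_derivative D x) (at x)) \<and> (\<forall>h. real_polynomial_function (\<lambda>x. D x h))"
  using assms
proof (induction p rule: real_polynomial_function.induct)
  case (linear f)
  then show ?case
    by (rule_tac x="\<lambda>x. f" in exI) (auto intro: bounded_linear_imp_has_derivative)
next
  case (const c)
  then show ?case by (rule_tac x="\<lambda>x h. 0" in exI) auto
next
  case (add f g)
  then obtain D1 D2 where "\<forall>x. (f has_derivative D1 x) (at x)" "\<forall>h. real_polynomial_function (\<lambda>x. D1 x h)"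
    "\<forall>x. (g has_derivative D2 x) (at x)" "\<forall>h. real_polynomial_function (\<lambda>x. D2 x h)" by blast
  then show ?case
    by (rule_tac x="\<lambda>x h. D1 x h + D2 x h" in exI) (auto intro!: has_derivative_add)
next
  case (mult f g)
  then obtain D1 D2 where "\<forall>x. (f has_derivative D1 x) (at x)" "\<forall>h. real_polynomial_function (\<lambda>x. D1 x h)"
    "\<forall>x. (g has_derivative D2 x) (at x)" "\<forall>h. real_polynomial_function (\<lambda>x. D2 x h)" by blast
  then show ?case
    using mult.hyps
    by (rule_tac x="\<lambda>x h. f x * D2 x h + D1 x h * g x" in exI)
       (auto intro!: has_derivative_mult real_polynomial_function.intros(3,4))
qed

definition poly_deriv :: "('a::euclidean_space \<Rightarrow> real) \<Rightarrow> 'a \<Rightarrow> 'a \<Rightarrow> real" where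
  "poly_deriv p = (SOME D. (\<forall>x. (p has_derivative D x) (at x)) \<and>
                          (\<forall>h. real_polynomial_function (\<lambda>x. D x h)))"

context
  fixes p :: "'a::euclidean_space \<Rightarrow> real"
  assumes p: "real_polynomial_function p"
begin

lemma has_derivative_poly_deriv: "(p has_derivative poly_deriv p x) (at x)"
  and real_polynomial_function_poly_deriv: "real_polynomial_function (\<lambda>x. poly_deriv p x h)"
  using someI_ex[OF real_polynomial_function_has_polynomial_derivative[OF p]]
  unfolding poly_deriv_def by blast+

lemma poly_deriv_unique: "(p has_derivative D) (at x) \<Longrightarrow> poly_deriv p x = D"
  using has_derivative_unique[OF has_derivative_poly_deriv] .

lemma linear_poly_deriv: "linear (poly_deriv p x)"
  using has_derivative_poly_deriv has_derivative_linear by blast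

lemma poly_deriv_eq_sum_Basis: "poly_deriv p x y = (\<Sum>b\<in>Basis. (y \<bullet> b) * poly_deriv p x b)"
proof -
  have "poly_deriv p x y = poly_deriv p x (\<Sum>b\<in>Basis. (y \<bullet> b) *\<^sub>R b)"
    by (simp add: euclidean_representation)
  then show ?thesis
    by (simp add: linear_sum[OF linear_poly_deriv] linear_scale[OF linear_poly_deriv])
qed

lemma has_real_derivative_poly_along_line:
  "((\<lambda>u. p (x + u *\<^sub>R b)) has_real_derivative poly_deriv p (x + t *\<^sub>R b) b) (at t)"
proof -
  have "((\<lambda>u. x + u *\<^sub>R b) has_derivative (\<lambda>h. h *\<^sub>R b)) (at t)"
    by (auto intro!: derivative_eq_intros)
  from has_derivative_compose[OF this has_derivative_poly_deriv]
  have "((\<lambda>u. p (x + u *\<^sub>R b)) has_derivative (\<lambda>h. poly_deriv p (x + t *\<^sub>R b) (h *\<^sub>R b))) (at t)"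
    by (simp add: o_def)
  then show ?thesis
    unfolding has_field_derivative_def
    by (rule has_derivative_eq_rhs) (auto simp: linear_scale[OF linear_poly_deriv] fun_eq_iff)
qed

lemma deriv_poly_along_line: "deriv (\<lambda>u. p (x + u *\<^sub>R b)) t = poly_deriv p (x + t *\<^sub>R b) b"
  using DERIV_imp_deriv has_real_derivative_poly_along_line by blast

lemma Euler_homogeneous:
  assumes "homogeneous_deg d p"
  shows "poly_deriv p x x = real d * p x"
proof -
  have "((\<lambda>u. u ^ d * p x) has_real_derivative poly_deriv p x x) (at 1)"
    using has_real_derivative_poly_along_line[of 0 x 1] assms
    by (simp add: homogeneous_deg_def)
  moreover have "((\<lambda>u. u ^ d * p x) has_real_derivative real d * p x) (at 1)"
    by (auto intro!: derivative_eq_intros)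
  ultimately show ?thesis by (rule DERIV_unique)
qed

end

lemma laplacian_eq_poly_deriv:
  assumes "real_polynomial_function p"
  shows "laplacian p x = (\<Sum>b\<in>Basis. poly_deriv (\<lambda>z. poly_deriv p z b) x b)"
  using deriv_poly_along_line[OF real_polynomial_function_poly_deriv[OF assms]]
  by (simp add: laplacian_def deriv_poly_along_line[OF assms])

lemma continuous_on_real_polynomial_function:
  "real_polynomial_function p \<Longrightarrow> continuous_on S p"
  by (simp add: continuous_at_imp_continuous_on continuous_real_polymonial_function)

lemma harm_hom_polyD:
  assumes "harm_hom_poly d p"
  shows "real_polynomial_function p" "homogeneous_deg d p" "laplacian p x = 0"
  using assms unfolding harm_hom_poly_def by auto

definition green_field :: "('a::euclidean_space \<Rightarrow> real) \<Rightarrow> ('a \<Rightarrow> real) \<Rightarrow> 'a \<Rightarrow> 'a \<Rightarrow> real" where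
  "green_field u v b x = u x * poly_deriv v x b - v x * poly_deriv u x b"

context
  fixes u v :: "'a::euclidean_space \<Rightarrow> real"
  assumes u: "real_polynomial_function u" and v: "real_polynomial_function v"
begin

lemma real_polynomial_function_green_field: "real_polynomial_function (green_field u v b)"
  unfolding green_field_def[abs_def]
  using real_polynomial_function_poly_deriv[OF u] real_polynomial_function_poly_deriv[OF v] u v
  by (intro real_polynomial_function_diff real_polynomial_function.intros(4))

lemma div_green_field:
  assumes "\<And>x. laplacian u x = 0" "\<And>x. laplacian v x = 0"
  shows "(\<Sum>b\<in>Basis. poly_deriv (green_field u v b) x b) = 0"
proof -
  have "poly_deriv (green_field u v b) x b =
      u x * poly_deriv (\<lambda>z. poly_deriv v z b) x b - v x * poly_deriv (\<lambda>z. poly_deriv u z b) x b" for b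
  proof -
    have "(green_field u v b has_derivative
        (\<lambda>h. (u x * poly_deriv (\<lambda>z. poly_deriv v z b) x h + poly_deriv u x h * poly_deriv v x b)
           - (v x * poly_deriv (\<lambda>z. poly_deriv u z b) x h + poly_deriv v x h * poly_deriv u x b))) (at x)"
      unfolding green_field_def[abs_def]
      by (intro has_derivative_diff has_derivative_mult has_derivative_poly_deriv u v
          real_polynomial_function_poly_deriv)
    from poly_deriv_unique[OF real_polynomial_function_green_field this] show ?thesis by simp
  qed
  then have "(\<Sum>b\<in>Basis. poly_deriv (green_field u v b) x b) = u x * laplacian v x - v x * laplacian u x"
    by (simp add: laplacian_eq_poly_deriv u v sum_subtractf sum_distrib_left)
  with assms show ?thesis by simp
qed

lemma radial_green_field:
  assumes "homogeneous_deg d u" "homogeneous_deg e v"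
  shows "(\<Sum>b\<in>Basis. (x \<bullet> b) * green_field u v b x) = (real e - real d) * (u x * v x)"
proof -
  have "(\<Sum>b\<in>Basis. (x \<bullet> b) * green_field u v b x) = u x * poly_deriv v x x - v x * poly_deriv u x x"
    by (simp add: green_field_def poly_deriv_eq_sum_Basis[OF u, of x x]
        poly_deriv_eq_sum_Basis[OF v, of x x] right_diff_distrib sum_subtractf sum_distrib_left
        mult.assoc mult.left_commute)
  then show ?thesis
    by (simp add: Euler_homogeneous[OF u assms(1)] Euler_homogeneous[OF v assms(2)] algebra_simps)
qed

end

section \<open>Integrals of derivatives of compactly supported functions\<close>

lemma integrable_bounded_support:
  fixes f :: "'a::euclidean_space \<Rightarrow> real"
  assumes "f \<in> borel_measurable borel" "\<And>x. \<bar>f x\<bar> \<le> M" "bounded S" "\<And>x. x \<notin> S \<Longrightarrow> f x = 0"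
  shows "integrable lborel f"
proof -
  obtain r c where r: "S \<subseteq> cball c r"
    using \<open>bounded S\<close> bounded_subset_cball by blast
  have int: "integrable lborel (\<lambda>x. indicator (cball c r) x * M)"
    by (intro integrable_mult_left integrable_real_indicator emeasure_bounded_finite) auto
  have "\<bar>f x\<bar> \<le> indicator (cball c r) x * M" for x
    using assms(2)[of x] assms(4)[of x] r by (cases "x \<in> S") (auto simp: indicator_def subset_iff)
  then have bound: "AE x in lborel. norm (f x) \<le> norm (indicator (cball c r) x * M)"
    by (intro AE_I2) (smt (verit) real_norm_def)
  show ?thesis
    by (rule Bochner_Integration.integrable_bound[OF int _ bound]) (simp add: assms(1) measurable_lborel1)
qed

lemma bounded_continuous_vanishing_outside_ball:
  fixes g :: "'a::euclidean_space \<Rightarrow> real"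
  assumes "continuous_on UNIV g" "\<And>x. R < norm x \<Longrightarrow> g x = 0"
  obtains M where "\<And>x. \<bar>g x\<bar> \<le> M"
proof -
  have "compact (g ` cball 0 R)"
    by (rule compact_continuous_image) (auto intro: continuous_on_subset[OF assms(1)])
  then obtain M where M: "\<And>y. y \<in> g ` cball 0 R \<Longrightarrow> norm y \<le> M"
    using compact_imp_bounded bounded_iff by metis
  have "\<bar>g x\<bar> \<le> max M 0" for x
    using M[of "g x"] assms(2)[of x] by (cases "norm x \<le> R") auto
  then show ?thesis using that by blast
qed

lemma integrable_continuous_vanishing_outside_ball:
  fixes g :: "'a::euclidean_space \<Rightarrow> real"
  assumes "continuous_on UNIV g" "\<And>x. R < norm x \<Longrightarrow> g x = 0"
  shows "integrable lborel g"
proof -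
  obtain M where "\<And>x. \<bar>g x\<bar> \<le> M"
    using bounded_continuous_vanishing_outside_ball[OF assms] by blast
  then show ?thesis
    using assms by (intro integrable_bounded_support[where S = "cball 0 R"])
      (auto intro: borel_measurable_continuous_onI)
qed

lemma integral_lborel_translate:
  fixes g :: "'a::euclidean_space \<Rightarrow> real"
  assumes "g \<in> borel_measurable borel"
  shows "(\<integral>x. g (x + c) \<partial>lborel) = (\<integral>x. g x \<partial>lborel)"
proof -
  have "(\<integral>x. g x \<partial>lborel) = (\<integral>x. g x \<partial>(distr lborel borel ((+) c)))"
    by (simp add: lborel_distr_plus)
  also have "\<dots> = (\<integral>x. g (c + x) \<partial>lborel)"
    by (rule integral_distr) (auto simp: assms)
  finally show ?thesis by (simp add: add.commute)
qed

lemma integral_segment_derivative: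
  fixes H :: "'a::euclidean_space \<Rightarrow> real"
  assumes der: "\<And>x. (H has_derivative H' x) (at x)" and cont: "continuous_on UNIV (\<lambda>x. H' x e)"
  shows "(\<integral>t. H' (x + t *\<^sub>R e) e * indicator {0..1} t \<partial>lborel) = H (x + e) - H x"
proof -
  have "(\<integral>t. H' (x + t *\<^sub>R e) e * indicator {0..1} t \<partial>lborel) = H (x + 1 *\<^sub>R e) - H (x + 0 *\<^sub>R e)"
  proof (rule integral_FTC_Icc_real)
    fix t :: real
    have "((\<lambda>u. x + u *\<^sub>R e) has_derivative (\<lambda>h. h *\<^sub>R e)) (at t)"
      by (auto intro!: derivative_eq_intros)
    from has_derivative_compose[OF this der]
    have D: "((\<lambda>u. H (x + u *\<^sub>R e)) has_derivative (\<lambda>h. H' (x + t *\<^sub>R e) (h *\<^sub>R e))) (at t)"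
      by (simp add: o_def)
    have L: "linear (H' (x + t *\<^sub>R e))"
      using der has_derivative_linear by blast
    show "((\<lambda>u. H (x + u *\<^sub>R e)) has_real_derivative H' (x + t *\<^sub>R e) e) (at t)"
      unfolding has_field_derivative_def
      by (rule has_derivative_eq_rhs[OF D]) (simp add: linear_scale[OF L] fun_eq_iff)
    have "continuous_on UNIV ((\<lambda>y. H' y e) \<circ> (\<lambda>u. x + u *\<^sub>R e))"
      by (rule continuous_on_compose) (auto intro!: continuous_intros intro: continuous_on_subset[OF cont])
    then show "isCont (\<lambda>u. H' (x + u *\<^sub>R e) e) t"
      by (simp add: o_def continuous_on_eq_continuous_at)
  qed simp
  then show ?thesis by simp
qed

lemma integrable_segment_shift:
  fixes c :: "'a::euclidean_space \<Rightarrow> real"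
  assumes cont: "continuous_on UNIV c" and supp: "\<And>x. R < norm x \<Longrightarrow> c x = 0"
  shows "integrable (lborel \<Otimes>\<^sub>M lborel) (\<lambda>(t::real, x). c (x + t *\<^sub>R e) * indicator {0..1} t)"
proof -
  obtain M where M: "\<And>x. \<bar>c x\<bar> \<le> M"
    using bounded_continuous_vanishing_outside_ball[OF assms] by blast
  have "(\<lambda>p::real \<times> 'a. c (snd p + fst p *\<^sub>R e)) \<in> borel_measurable borel"
    by (intro borel_measurable_continuous_onI continuous_on_compose2[OF cont] continuous_intros) auto
  moreover have "(\<lambda>p::real \<times> 'a. indicator ({0..1} \<times> UNIV) p :: real) \<in> borel_measurable borel"
    by (intro borel_measurable_indicator borel_closed closed_Times) auto
  then have "(\<lambda>p::real \<times> 'a. indicator {0..1} (fst p) :: real) \<in> borel_measurable borel"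
    by (simp add: indicator_def mem_Times_iff)
  ultimately have meas: "(\<lambda>p::real \<times> 'a. c (snd p + fst p *\<^sub>R e) * indicator {0..1} (fst p))
      \<in> borel_measurable borel"
    by (rule borel_measurable_times)
  have vanish: "c (snd p + fst p *\<^sub>R e) * indicator {0..1} (fst p) = 0"
    if "p \<notin> {0..1} \<times> cball 0 (R + norm e)" for p :: "real \<times> 'a"
  proof (cases "fst p \<in> {0..1}")
    case True
    then have "R + norm e < norm (snd p)" "norm (fst p *\<^sub>R e) \<le> norm e"
      using that by (auto simp: mult_left_le_one_le mem_Times_iff)
    then show ?thesis using supp norm_triangle_ineq2[of "snd p" "- (fst p *\<^sub>R e)"] by auto
  qed simp
  have "integrable lborel (\<lambda>p::real \<times> 'a. c (snd p + fst p *\<^sub>R e) * indicator {0..1} (fst p))"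
  proof (rule integrable_bounded_support[OF meas, where S = "{0..1} \<times> cball 0 (R + norm e)" and M = "max M 0"])
    fix p :: "real \<times> 'a"
    show "\<bar>c (snd p + fst p *\<^sub>R e) * indicator {0..1} (fst p)\<bar> \<le> max M 0"
      using M[of "snd p + fst p *\<^sub>R e"] by (auto simp: indicator_def)
  qed (simp_all add: bounded_Times vanish)
  then show ?thesis by (simp add: lborel_prod case_prod_beta')
qed

text \<open>Average \<open>H' x e\<close> over the segment from \<open>x\<close> to \<open>x + e\<close>, then use Fubini and translation invariance.\<close>
lemma integral_directional_derivative_eq_0:
  fixes H :: "'a::euclidean_space \<Rightarrow> real"
  assumes der: "\<And>x. (H has_derivative H' x) (at x)"
    and cont: "continuous_on UNIV (\<lambda>x. H' x e)"
    and supp: "\<And>x. R < norm x \<Longrightarrow> H x = 0"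
    and supp': "\<And>x. R < norm x \<Longrightarrow> H' x e = 0"
  shows "(\<integral>x. H' x e \<partial>lborel) = 0"
proof -
  have contH: "continuous_on UNIV H"
    using der by (meson continuous_at_imp_continuous_on has_derivative_continuous)
  have measH: "H \<in> borel_measurable borel" and measH': "(\<lambda>x. H' x e) \<in> borel_measurable borel"
    by (intro borel_measurable_continuous_onI contH cont)+
  have "(\<integral>x. H' x e \<partial>lborel) = (\<integral>t. (\<integral>x. H' (x + t *\<^sub>R e) e * indicator {0..1} t \<partial>lborel) \<partial>lborel)"
    using integral_lborel_translate[OF measH'] by simp
  also have "\<dots> = (\<integral>x. (\<integral>t. H' (x + t *\<^sub>R e) e * indicator {0..1} t \<partial>lborel) \<partial>lborel)"
    using lborel_pair.Fubini_integral[OF integrable_segment_shift[OF cont supp']] by simp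
  also have "\<dots> = (\<integral>x. H (x + e) - H x \<partial>lborel)"
    by (simp add: integral_segment_derivative[OF der cont])
  also have "\<dots> = (\<integral>x. H (x + e) \<partial>lborel) - (\<integral>x. H x \<partial>lborel)"
  proof (rule Bochner_Integration.integral_diff)
    show "integrable lborel H" by (rule integrable_continuous_vanishing_outside_ball[OF contH supp])
    show "integrable lborel (\<lambda>x. H (x + e))"
    proof (intro integrable_continuous_vanishing_outside_ball[where R = "R + norm e"]
        continuous_on_compose2[OF contH] continuous_intros)
      fix x :: 'a
      assume "R + norm e < norm x"
      then show "H (x + e) = 0"
        using supp norm_triangle_ineq2[of x "- e"] by simp
    qed auto
  qed
  also have "\<dots> = 0"
    using integral_lborel_translate[OF measH] by simp
  finally show ?thesis .
qed

section \<open>Radial integrals of functions homogeneous of degree zero\<close>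

lemma integral_lborel_scaleR:
  fixes F :: "'a::euclidean_space \<Rightarrow> real"
  assumes "F \<in> borel_measurable borel" "t > 0"
  shows "(\<integral>x. F x \<partial>lborel) = t ^ DIM('a) * (\<integral>x. F (t *\<^sub>R x) \<partial>lborel)"
proof -
  have "(\<integral>x. F x \<partial>lborel) =
      (\<integral>x. F x \<partial>density (distr lborel borel (\<lambda>x. 0 + t *\<^sub>R x)) (\<lambda>_. ennreal (t ^ DIM('a))))"
    using lborel_affine[of t "0::'a"] assms(2) by (simp add: ennreal_power)
  also have "\<dots> = (\<integral>x. t ^ DIM('a) *\<^sub>R F x \<partial>distr lborel borel (\<lambda>x. 0 + t *\<^sub>R x))"
    by (rule integral_density) (use assms in auto)
  also have "\<dots> = (\<integral>x. t ^ DIM('a) *\<^sub>R F (0 + t *\<^sub>R x) \<partial>lborel)"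
    by (rule integral_distr) (use assms in auto)
  finally show ?thesis by simp
qed

lemma integral_unit_interval_power_diff:
  assumes "j > 0"
  shows "(\<integral>t. (real j * t ^ (j - 1) - real j * t ^ (j + m - 1)) * indicator {0..1} t \<partial>lborel)
    = real m / (m + j)"
proof -
  have "(\<integral>t. (real j * t ^ (j - 1) - real j * t ^ (j + m - 1)) * indicator {0..1} t \<partial>lborel)
      = (1 ^ j - real j / (j + m) * 1 ^ (j + m)) - (0 ^ j - real j / (j + m) * 0 ^ (j + m))"
  proof (rule integral_FTC_Icc_real)
    fix x :: real
    have "((\<lambda>t. t ^ j - real j / (j + m) * t ^ (j + m)) has_real_derivative
        real j * x ^ (j - 1) - real j / (j + m) * (real (j + m) * x ^ (j + m - 1))) (at x)"
      by (intro DERIV_diff DERIV_cmult DERIV_pow[unfolded One_nat_def[symmetric]])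
    then show "((\<lambda>t. t ^ j - real j / (j + m) * t ^ (j + m)) has_real_derivative
        real j * x ^ (j - 1) - real j * x ^ (j + m - 1)) (at x)"
      using assms by simp
  qed auto
  also have "\<dots> = real m / (m + j)"
    using assms by (simp add: zero_power field_simps)
  finally show ?thesis .
qed

locale zero_homogeneous =
  fixes g :: "'a::euclidean_space \<Rightarrow> real" and M :: real
  assumes measurable: "g \<in> borel_measurable borel"
    and bounded: "\<And>x. \<bar>g x\<bar> \<le> M"
    and homogeneous: "\<And>c x. c > 0 \<Longrightarrow> g (c *\<^sub>R x) = g x"
begin

definition ball_integral :: "real \<Rightarrow> real" where
  "ball_integral t = (\<integral>x. indicator (ball 0 t) x * g x \<partial>lborel)"

lemma ball_integral_scale: "0 \<le> t \<Longrightarrow> ball_integral t = t ^ DIM('a) * ball_integral 1"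
proof (cases "t = 0")
  case False
  assume "0 \<le> t"
  with False have t: "t > 0" by simp
  have "ball_integral t = t ^ DIM('a) * (\<integral>x. indicator (ball 0 t) (t *\<^sub>R x) * g (t *\<^sub>R x) \<partial>lborel)"
    unfolding ball_integral_def
    by (rule integral_lborel_scaleR) (use t measurable in \<open>auto intro!: borel_measurable_times borel_measurable_indicator\<close>)
  also have "(\<lambda>x. indicator (ball 0 t) (t *\<^sub>R x) * g (t *\<^sub>R x)) = (\<lambda>x. indicator (ball (0::'a) 1) x * g x)"
    using t by (auto simp: fun_eq_iff indicator_def homogeneous)
  finally show ?thesis unfolding ball_integral_def by simp
qed (simp add: ball_integral_def)

lemma integrable_ball_indicator_norm_power:
  "integrable lborel (\<lambda>x. indicator (ball 0 r) x * (norm x ^ j * g x))"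
proof (rule integrable_bounded_support[where S = "ball 0 r" and M = "max 1 r ^ j * M"])
  show "(\<lambda>x. indicator (ball 0 r) x * (norm x ^ j * g x)) \<in> borel_measurable borel"
  proof -
    have "(\<lambda>x::'a. norm x ^ j) \<in> borel_measurable borel"
      by (intro borel_measurable_continuous_onI continuous_intros)
    then show ?thesis
      using measurable by (intro borel_measurable_times borel_measurable_indicator) auto
  qed
  have "\<bar>norm x ^ j * g x\<bar> \<le> max 1 r ^ j * M" if "norm x < r" for x :: 'a
    using that bounded[of x] by (auto simp: abs_mult intro!: mult_mono power_mono)
  then show "\<bar>indicator (ball 0 r) x * (norm x ^ j * g x)\<bar> \<le> max 1 r ^ j * M" for x
    using bounded[of x] by (cases "norm x < r") (auto simp: indicator_def)
qed (auto simp: indicator_def)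

text \<open>Layer cake: \<open>|x|\<^sup>j = \<integral>\<^sub>0\<^bsup>|x|\<^esup> j t\<^bsup>j-1\<^esup> dt\<close>; by homogeneity the slice at height \<open>t\<close> contributes
  \<open>(1 - t\<^sup>m)\<close> times the integral over the unit ball, where \<open>m = DIM('a)\<close>.\<close>
definition shell_set :: "(real \<times> 'a) set" where
  "shell_set = {p. 0 \<le> fst p \<and> fst p \<le> norm (snd p) \<and> norm (snd p) < 1}"

lemma integrable_shell:
  "integrable (lborel \<Otimes>\<^sub>M lborel) (\<lambda>(t, x). indicator shell_set (t, x) * (real j * t ^ (j - 1) * g x))"
proof -
  have eq: "shell_set = {p. 0 \<le> fst p} \<inter> {p. fst p \<le> norm (snd p)} \<inter> {p::real \<times> 'a. norm (snd p) < 1}"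
    by (auto simp: shell_set_def)
  have "closed {p::real \<times> 'a. 0 \<le> fst p}" "closed {p::real \<times> 'a. fst p \<le> norm (snd p)}"
    "open {p::real \<times> 'a. norm (snd p) < 1}"
    by (intro closed_Collect_le open_Collect_less continuous_intros)+
  then have "shell_set \<in> sets borel"
    unfolding eq by (intro sets.Int borel_closed borel_open[of "{p. norm (snd p) < 1}"])
  then have "(\<lambda>p. indicator shell_set p :: real) \<in> borel_measurable borel"
    by simp
  moreover have "(\<lambda>p::real \<times> 'a. real j * fst p ^ (j - 1)) \<in> borel_measurable borel"
    by (intro borel_measurable_continuous_onI continuous_intros)
  moreover have "(\<lambda>p::real \<times> 'a. g (snd p)) \<in> borel_measurable borel"
    by (subst borel_prod[symmetric]) (rule measurable_compose[OF measurable_snd measurable])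
  ultimately have meas: "(\<lambda>p. indicator shell_set p * (real j * fst p ^ (j - 1) * g (snd p))) \<in> borel_measurable borel"
    by (rule borel_measurable_times[OF _ borel_measurable_times])
  have bound: "\<bar>indicator shell_set p * (real j * fst p ^ (j - 1) * g (snd p))\<bar> \<le> real j * M" for p
  proof (cases "p \<in> shell_set")
    case True
    then have "0 \<le> fst p" "fst p \<le> 1" by (auto simp: shell_set_def)
    then have "fst p ^ (j - 1) * \<bar>g (snd p)\<bar> \<le> 1 * M"
      using bounded[of "snd p"] by (intro mult_mono power_le_one) auto
    with True \<open>0 \<le> fst p\<close> show ?thesis by (simp add: abs_mult mult.assoc mult_left_mono)
  qed (use bounded[of 0] in simp)
  have "integrable lborel (\<lambda>p. indicator shell_set p * (real j * fst p ^ (j - 1) * g (snd p)))"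
    by (rule integrable_bounded_support[OF meas bound, where S = "{0..1} \<times> cball 0 1"])
      (auto simp: bounded_Times shell_set_def)
  then show ?thesis by (simp add: lborel_prod case_prod_beta')
qed

lemma integral_shell_radial:
  assumes "j > 0"
  shows "(\<integral>t. indicator shell_set (t, x) * (real j * t ^ (j - 1) * g x) \<partial>lborel)
    = indicator (ball 0 1) x * (norm x ^ j * g x)"
proof (cases "norm x < 1")
  case True
  have "(\<lambda>t. indicator shell_set (t, x) * (real j * t ^ (j - 1) * g x))
      = (\<lambda>t. (real j * t ^ (j - 1)) * indicator {0..norm x} t * g x)"
    using True by (auto simp: fun_eq_iff shell_set_def indicator_def)
  moreover have "(\<integral>t. (real j * t ^ (j - 1)) * indicator {0..norm x} t \<partial>lborel) = norm x ^ j - 0 ^ j"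
    by (rule integral_FTC_Icc_real) (auto intro!: derivative_eq_intros simp: assms)
  ultimately show ?thesis using True assms by (simp add: indicator_def)
qed (simp add: shell_set_def indicator_def)

lemma integral_shell_spherical:
  "(\<integral>x. indicator shell_set (t, x) * (real j * t ^ (j - 1) * g x) \<partial>lborel)
    = (real j * t ^ (j - 1) - real j * t ^ (j + DIM('a) - 1)) * indicator {0..1} t * ball_integral 1"
proof (cases "0 \<le> t \<and> t \<le> 1")
  case True
  have shell: "indicator shell_set (t, x) = indicator (ball 0 1) x - (indicator (ball 0 t) x :: real)" for x :: 'a
  proof -
    have "(t, x) \<in> shell_set \<longleftrightarrow> x \<in> ball 0 1 \<and> x \<notin> ball 0 t" "x \<in> ball 0 t \<Longrightarrow> x \<in> ball 0 1"
      using True by (auto simp: shell_set_def)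
    then show ?thesis by (simp add: indicator_def)
  qed
  have "(\<lambda>x. indicator shell_set (t, x) * (real j * t ^ (j - 1) * g x))
      = (\<lambda>x. real j * t ^ (j - 1) * (indicator (ball 0 1) x * g x - indicator (ball 0 t) x * g x))"
    unfolding shell by (rule ext) (simp add: left_diff_distrib right_diff_distrib mult_ac)
  moreover have "integrable lborel (\<lambda>x. indicator (ball (0::'a) r) x * g x)" for r
    using integrable_ball_indicator_norm_power[of r 0] by simp
  ultimately have "(\<integral>x. indicator shell_set (t, x) * (real j * t ^ (j - 1) * g x) \<partial>lborel)
      = real j * t ^ (j - 1) * (ball_integral 1 - ball_integral t)"
    by (simp add: ball_integral_def)
  also have "\<dots> = (real j * t ^ (j - 1) - real j * t ^ (j + DIM('a) - 1)) * ball_integral 1"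
  proof (cases "j = 0")
    case False
    then have "t ^ (j - 1) * t ^ DIM('a) = t ^ (j + DIM('a) - 1)"
      by (simp add: power_add[symmetric])
    then show ?thesis using True by (simp add: ball_integral_scale[of t] algebra_simps)
  qed simp
  finally show ?thesis using True by simp
next
  case False
  then have "indicator shell_set (t, x) = (0::real)" for x :: 'a
    by (auto simp: shell_set_def indicator_def)
  with False show ?thesis by simp
qed

lemma integral_ball_norm_power:
  "(\<integral>x. indicator (ball 0 1) x * (norm x ^ j * g x) \<partial>lborel)
    = real DIM('a) / (DIM('a) + j) * ball_integral 1"
proof (cases "j = 0")
  case True
  then show ?thesis by (simp add: ball_integral_def)
next
  case False
  let ?\<phi> = "\<lambda>t x. indicator shell_set (t, x) * (real j * t ^ (j - 1) * g x)"
  have "(\<integral>x. indicator (ball 0 1) x * (norm x ^ j * g x) \<partial>lborel) = (\<integral>x. (\<integral>t. ?\<phi> t x \<partial>lborel) \<partial>lborel)"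
    using False by (simp only: integral_shell_radial)
  also have "\<dots> = (\<integral>t. (\<integral>x. ?\<phi> t x \<partial>lborel) \<partial>lborel)"
    using lborel_pair.Fubini_integral[OF integrable_shell] by simp
  also have "\<dots> = (\<integral>t. (real j * t ^ (j - 1) - real j * t ^ (j + DIM('a) - 1)) * indicator {0..1} t
      * ball_integral 1 \<partial>lborel)"
    by (simp only: integral_shell_spherical)
  also have "\<dots> = (\<integral>t. (real j * t ^ (j - 1) - real j * t ^ (j + DIM('a) - 1)) * indicator {0..1} t \<partial>lborel)
      * ball_integral 1"
    by (rule integral_mult_left_zero)
  also have "\<dots> = real DIM('a) / (DIM('a) + j) * ball_integral 1"
    using False by (simp only: integral_unit_interval_power_diff)
  finally show ?thesis .
qed

end

section \<open>The measure on the sphere\<close>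

lemma space_sph: "space (sph :: 'a::euclidean_space measure) = sphere 0 1"
  by (simp add: sph_def)

lemma sets_sph: "sets (sph :: 'a::euclidean_space measure) = sets (restrict_space borel (sphere (0::'a) 1))"
  by (simp add: sph_def)

lemma measurable_sph_iff:
  "h \<in> borel_measurable (sph :: 'a::euclidean_space measure) \<longleftrightarrow>
   h \<in> borel_measurable (restrict_space borel (sphere (0::'a) 1))"
  by (simp add: measurable_cong_sets[OF sets_sph refl])

lemma measurable_sphere_projection:
  "(\<lambda>x::'a::euclidean_space. x /\<^sub>R norm x) \<in> measurable
     (scale_measure r (restrict_space lborel (ball 0 1 - {0}))) (restrict_space borel (sphere 0 1))"
proof -
  have "(\<lambda>x::'a. x /\<^sub>R norm x) \<in> measurable (restrict_space lborel (ball 0 1 - {0})) (restrict_space borel (sphere 0 1))"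
    by (intro measurable_restrict_space2 measurable_restrict_space1)
      (auto simp: space_restrict_space measurable_lborel1)
  then show ?thesis
    by (simp add: measurable_cong_sets[of "scale_measure r _" _ _ "restrict_space borel (sphere 0 1)"])
qed

lemma scale_measure_eq_density_const:
  assumes "c \<ge> 0"
  shows "scale_measure (ennreal c) M = density M (\<lambda>_. ennreal c)"
  by (rule measure_eqI) (auto simp: emeasure_density nn_integral_cmult_indicator)

lemma integral_sph:
  fixes h :: "'a::euclidean_space \<Rightarrow> 'b::{banach, second_countable_topology}"
  assumes h: "h \<in> borel_measurable borel"
  shows "(\<integral>x. h x \<partial>sph) =
    (1 / measure lborel (ball (0::'a) 1)) *\<^sub>R (\<integral>x. indicator (ball 0 1) x *\<^sub>R h (x /\<^sub>R norm x) \<partial>lborel)"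
proof -
  let ?D = "ball (0::'a) 1 - {0}" and ?c = "1 / measure lborel (ball (0::'a) 1)"
  have hn: "(\<lambda>x. h (x /\<^sub>R norm x)) \<in> borel_measurable borel"
    using h by measurable
  have "(\<integral>x. h x \<partial>sph) = (\<integral>x. h (x /\<^sub>R norm x) \<partial>scale_measure (ennreal ?c) (restrict_space lborel ?D))"
    unfolding sph_def
    by (rule integral_distr[OF measurable_sphere_projection measurable_restrict_space1[OF h]])
  also have "\<dots> = (\<integral>x. h (x /\<^sub>R norm x) \<partial>density (restrict_space lborel ?D) (\<lambda>_. ennreal ?c))"
    by (simp add: scale_measure_eq_density_const)
  also have "\<dots> = (\<integral>x. ?c *\<^sub>R h (x /\<^sub>R norm x) \<partial>restrict_space lborel ?D)"
    using hn by (intro integral_density) (auto intro: measurable_restrict_space1 simp: measurable_lborel1)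
  also have "\<dots> = (\<integral>x. indicator ?D x *\<^sub>R (?c *\<^sub>R h (x /\<^sub>R norm x)) \<partial>lborel)"
    by (rule integral_restrict_space) auto
  also have "\<dots> = (\<integral>x. ?c *\<^sub>R (indicator (ball 0 1) x *\<^sub>R h (x /\<^sub>R norm x)) \<partial>lborel)"
    using hn AE_lborel_singleton[of "0::'a"]
    by (intro integral_cong_AE) (auto elim!: eventually_mono simp: indicator_def measurable_lborel1)
  also have "\<dots> = ?c *\<^sub>R (\<integral>x. indicator (ball 0 1) x *\<^sub>R h (x /\<^sub>R norm x) \<partial>lborel)"
    by (rule integral_scaleR_right)
  finally show ?thesis .
qed

lemma emeasure_sph_space: "emeasure (sph :: 'a::euclidean_space measure) (space sph) = 1"
proof -
  let ?D = "ball (0::'a) 1 - {0}" and ?V = "measure lborel (ball (0::'a) 1)"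
  have "sphere 0 1 \<in> sets (restrict_space borel (sphere (0::'a) 1))"
    using sets.top[of "restrict_space borel (sphere (0::'a) 1)"] by (simp add: space_restrict_space)
  moreover have "(\<lambda>x. x /\<^sub>R norm x) -` sphere 0 1 \<inter> ?D = ?D"
    by auto
  ultimately have "emeasure (sph :: 'a measure) (space sph) =
      emeasure (scale_measure (ennreal (1 / ?V)) (restrict_space lborel ?D)) ?D"
    unfolding sph_def
    by (subst emeasure_distr[OF measurable_sphere_projection])
      (auto simp: space_restrict_space space_scale_measure intro!: arg_cong2[where f = emeasure])
  also have "\<dots> = ennreal (1 / ?V) * emeasure lborel ?D"
    by (simp add: emeasure_restrict_space)
  also have "emeasure lborel ?D = emeasure lborel (ball (0::'a) 1)"
    by (rule emeasure_Diff_null_set) (auto intro!: finite_imp_null_set_lborel)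
  also have "\<dots> = ennreal ?V"
    using emeasure_lborel_ball_finite[of "0::'a" 1] by (simp add: emeasure_eq_ennreal_measure)
  finally show ?thesis
    using content_ball_pos[of 1 "0::'a"] by (simp add: ennreal_mult[symmetric])
qed

lemma finite_measure_sph: "finite_measure (sph :: 'a::euclidean_space measure)"
  by (rule finite_measureI) (simp add: emeasure_sph_space)

lemma integrable_sph_continuous:
  fixes h :: "'a::euclidean_space \<Rightarrow> 'b::{banach, second_countable_topology}"
  assumes "continuous_on (sphere 0 1) h"
  shows "integrable sph h"
proof -
  obtain B where "\<And>y. y \<in> h ` sphere 0 1 \<Longrightarrow> norm y \<le> B"
    using compact_continuous_image[OF assms compact_sphere] compact_imp_bounded bounded_iff by metis
  then show ?thesis
    using assms
    by (intro finite_measure.integrable_const_bound[OF finite_measure_sph, where B = B])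
      (auto simp: space_sph measurable_sph_iff intro: borel_measurable_continuous_on_restrict)
qed

section \<open>Orthogonality of spherical harmonics of different degrees\<close>

lemma has_real_derivative_max0_power2: "((\<lambda>r::real. (max 0 r)\<^sup>2) has_real_derivative 2 * max 0 r) (at r)"
proof -
  consider "r > 0" | "r < 0" | "r = 0" by linarith
  then show ?thesis
  proof cases
    case 1
    have "((\<lambda>r::real. r\<^sup>2) has_real_derivative 2 * max 0 r) (at r)"
      using 1 by (auto intro!: derivative_eq_intros)
    then show ?thesis
      by (rule has_field_derivative_transform_within_open[where S = "{0<..}"]) (use 1 in auto)
  next
    case 2
    have "((\<lambda>r::real. 0) has_real_derivative 2 * max 0 r) (at r)" using 2 by simp
    then show ?thesis
      by (rule has_field_derivative_transform_within_open[where S = "{..<0}"]) (use 2 in auto)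
  next
    case 3
    have "((\<lambda>y. ((max 0 y)\<^sup>2 - (max 0 0)\<^sup>2) / (y - 0)) \<longlongrightarrow> (0::real)) (at 0)"
    proof (rule Lim_null_comparison)
      show "\<forall>\<^sub>F y in at 0. norm (((max 0 y)\<^sup>2 - (max 0 0)\<^sup>2) / (y - 0)) \<le> \<bar>y\<bar>"
      proof (intro always_eventually allI)
        fix y :: real
        show "norm (((max 0 y)\<^sup>2 - (max 0 0)\<^sup>2) / (y - 0)) \<le> \<bar>y\<bar>"
          by (cases "y > 0") (auto simp: power2_eq_square abs_mult)
      qed
      show "((\<lambda>y::real. \<bar>y\<bar>) \<longlongrightarrow> 0) (at 0)"
        using tendsto_rabs[OF tendsto_ident_at[of 0 UNIV]] by simp
    qed
    then show ?thesis using 3 by (simp add: has_field_derivative_iff)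
  qed
qed

definition ball_weight :: "'a::euclidean_space \<Rightarrow> real" where
  "ball_weight x = max 0 (1 - x \<bullet> x)"

lemma continuous_on_ball_weight: "continuous_on UNIV ball_weight"
  unfolding ball_weight_def[abs_def] by (intro continuous_intros)

lemma ball_weight_eq: "ball_weight x = indicator (ball 0 1) x * (1 - (norm x)\<^sup>2)"
proof (cases "norm x < 1")
  case True
  then have "(norm x)\<^sup>2 < 1" by (simp add: power_less_one_iff abs_square_less_1)
  with True show ?thesis by (simp add: ball_weight_def power2_norm_eq_inner)
next
  case False
  then have "1 \<le> (norm x)\<^sup>2" by (simp add: one_le_power)
  with False show ?thesis by (simp add: ball_weight_def power2_norm_eq_inner)
qed

lemma has_derivative_ball_weight_square_mult:
  fixes G :: "'a::euclidean_space \<Rightarrow> real"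
  assumes "(G has_derivative G') (at x)"
  shows "((\<lambda>x. (ball_weight x)\<^sup>2 * G x) has_derivative
          (\<lambda>h. (ball_weight x)\<^sup>2 * G' h - 4 * ball_weight x * (x \<bullet> h) * G x)) (at x)"
proof -
  have "((\<lambda>x::'a. 1 - x \<bullet> x) has_derivative (\<lambda>h. - 2 * (x \<bullet> h))) (at x)"
    by (auto intro!: derivative_eq_intros simp: inner_commute)
  from has_derivative_compose[OF this has_real_derivative_max0_power2[unfolded has_field_derivative_def]]
  have "((\<lambda>x. (ball_weight x)\<^sup>2) has_derivative (\<lambda>h. - 4 * ball_weight x * (x \<bullet> h))) (at x)"
    unfolding ball_weight_def[abs_def] o_def by (rule has_derivative_eq_rhs) (auto simp: fun_eq_iff)
  from has_derivative_mult[OF this assms] show ?thesis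
    by (rule has_derivative_eq_rhs) (auto simp: fun_eq_iff algebra_simps)
qed

lemma sum_weighted_green_field_derivative:
  fixes u v :: "'a::euclidean_space \<Rightarrow> real"
  assumes u: "harm_hom_poly d u" and v: "harm_hom_poly e v"
  shows "(\<Sum>b\<in>Basis. (ball_weight x)\<^sup>2 * poly_deriv (green_field u v b) x b
      - 4 * ball_weight x * (x \<bullet> b) * green_field u v b x)
    = - 4 * (real e - real d) * (ball_weight x * (u x * v x))"
proof -
  note pu = harm_hom_polyD[OF u] and pv = harm_hom_polyD[OF v]
  have "(\<Sum>b\<in>Basis. (ball_weight x)\<^sup>2 * poly_deriv (green_field u v b) x b
      - 4 * ball_weight x * (x \<bullet> b) * green_field u v b x)
    = (ball_weight x)\<^sup>2 * (\<Sum>b\<in>Basis. poly_deriv (green_field u v b) x b)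
      - 4 * ball_weight x * (\<Sum>b\<in>Basis. (x \<bullet> b) * green_field u v b x)"
    by (simp add: sum_subtractf sum_distrib_left mult.assoc)
  also have "\<dots> = - 4 * (real e - real d) * (ball_weight x * (u x * v x))"
    by (simp add: div_green_field[OF pu(1) pv(1) pu(3) pv(3)]
        radial_green_field[OF pu(1) pv(1) pu(2) pv(2)] algebra_simps)
  finally show ?thesis .
qed

text \<open>The divergence theorem for \<open>(1 - |x|\<^sup>2)\<^sub>+\<^sup>2\<close> times the Green field; the weight is squared
  so that the field stays differentiable across the unit sphere.\<close>
lemma integral_ball_weight_harmonic_product:
  fixes u v :: "'a::euclidean_space \<Rightarrow> real"
  assumes u: "harm_hom_poly d u" and v: "harm_hom_poly e v" and "d \<noteq> e"
  shows "(\<integral>x. ball_weight x * (u x * v x) \<partial>lborel) = 0"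
proof -
  note pu = harm_hom_polyD[OF u] and pv = harm_hom_polyD[OF v]
  let ?G = "green_field u v"
  have G: "real_polynomial_function (?G b)" for b
    by (rule real_polynomial_function_green_field[OF pu(1) pv(1)])
  define H' where "H' b x h = (ball_weight x)\<^sup>2 * poly_deriv (?G b) x h - 4 * ball_weight x * (x \<bullet> h) * ?G b x"
    for b x h
  have cont: "continuous_on UNIV (\<lambda>x. H' b x b)" for b
    unfolding H'_def using G real_polynomial_function_poly_deriv[OF G]
    by (intro continuous_intros continuous_on_ball_weight)
      (auto intro: continuous_on_real_polynomial_function)
  have vanish: "1 < norm x \<Longrightarrow> ball_weight x = 0" for x :: 'a
    by (simp add: ball_weight_eq indicator_def)
  have int: "integrable lborel (\<lambda>x. H' b x b)" and int0: "(\<integral>x. H' b x b \<partial>lborel) = 0" for b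
  proof -
    show "integrable lborel (\<lambda>x. H' b x b)"
      by (rule integrable_continuous_vanishing_outside_ball[OF cont, where R = 1]) (simp add: H'_def vanish)
    show "(\<integral>x. H' b x b \<partial>lborel) = 0"
    proof (rule integral_directional_derivative_eq_0[where H' = "H' b" and e = b and R = 1, OF _ cont])
      show "((\<lambda>x. (ball_weight x)\<^sup>2 * ?G b x) has_derivative H' b x) (at x)" for x
        unfolding H'_def[abs_def]
        by (rule has_derivative_ball_weight_square_mult[OF has_derivative_poly_deriv[OF G]])
    qed (simp_all add: H'_def vanish)
  qed
  have "(\<Sum>b\<in>Basis. H' b x b) = - 4 * (real e - real d) * (ball_weight x * (u x * v x))" for x
    unfolding H'_def by (rule sum_weighted_green_field_derivative[OF u v])
  moreover have "(\<integral>x. (\<Sum>b\<in>Basis. H' b x b) \<partial>lborel) = 0"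
    using int int0 by (simp add: Bochner_Integration.integral_sum)
  ultimately have "- 4 * (real e - real d) * (\<integral>x. ball_weight x * (u x * v x) \<partial>lborel) = 0"
    by simp
  with \<open>d \<noteq> e\<close> show ?thesis by simp
qed

context zero_homogeneous
begin

lemma integral_ball_weight_norm_power:
  "(\<integral>x. ball_weight x * (norm x ^ k * g x) \<partial>lborel)
    = (real DIM('a) / (DIM('a) + k) - real DIM('a) / (DIM('a) + (k + 2))) * ball_integral 1"
proof -
  have "ball_weight x * (norm x ^ k * g x) =
      indicator (ball 0 1) x * (norm x ^ k * g x) - indicator (ball 0 1) x * (norm x ^ (k + 2) * g x)" for x
    by (simp add: ball_weight_eq power_add power2_eq_square algebra_simps)
  then have "(\<integral>x. ball_weight x * (norm x ^ k * g x) \<partial>lborel) = (\<integral>x. indicator (ball 0 1) x * (norm x ^ k * g x)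
      - indicator (ball 0 1) x * (norm x ^ (k + 2) * g x) \<partial>lborel)"
    by simp
  also have "\<dots> = (real DIM('a) / (DIM('a) + k) - real DIM('a) / (DIM('a) + (k + 2))) * ball_integral 1"
    by (simp only: Bochner_Integration.integral_diff[OF integrable_ball_indicator_norm_power
        integrable_ball_indicator_norm_power] integral_ball_norm_power left_diff_distrib)
  finally show ?thesis .
qed

end

lemma homogeneous_deg_mult:
  "homogeneous_deg d u \<Longrightarrow> homogeneous_deg e v \<Longrightarrow> homogeneous_deg (d + e) (\<lambda>x. u x * v x)"
  unfolding homogeneous_deg_def by (simp add: power_add algebra_simps)

lemma homogeneous_deg_eq_norm_power:
  fixes w :: "'a::real_normed_vector \<Rightarrow> real"
  assumes "homogeneous_deg k w" "k \<ge> 1"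
  shows "w x = norm x ^ k * w (x /\<^sub>R norm x)"
proof (cases "x = 0")
  case True
  have "w (0 *\<^sub>R 0) = 0 ^ k * w 0" using assms(1) unfolding homogeneous_deg_def by blast
  with True assms(2) show ?thesis by simp
next
  case False
  then have "w x = w (norm x *\<^sub>R (x /\<^sub>R norm x))" by simp
  also have "\<dots> = norm x ^ k * w (x /\<^sub>R norm x)"
    using assms(1) unfolding homogeneous_deg_def by blast
  finally show ?thesis .
qed

lemma integral_sph_harmonic_product:
  fixes u v :: "'a::euclidean_space \<Rightarrow> real"
  assumes u: "harm_hom_poly d u" and v: "harm_hom_poly e v" and "d \<noteq> e"
  shows "(\<integral>x. u x * v x \<partial>sph) = 0"
proof -
  note pu = harm_hom_polyD[OF u] and pv = harm_hom_polyD[OF v]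
  define k where "k = d + e"
  have k: "k \<ge> 1" using \<open>d \<noteq> e\<close> by (simp add: k_def)
  have cw: "continuous_on UNIV (\<lambda>x. u x * v x)"
    using pu(1) pv(1)
    by (intro continuous_intros continuous_on_real_polynomial_function)
  define g where "g x = u (x /\<^sub>R norm x) * v (x /\<^sub>R norm x)" for x
  obtain M where M: "\<And>y. y \<in> (\<lambda>x. u x * v x) ` cball 0 1 \<Longrightarrow> norm y \<le> M"
    using compact_continuous_image[OF continuous_on_subset[OF cw] compact_cball] compact_imp_bounded bounded_iff
    by (metis subset_UNIV)
  interpret zero_homogeneous g M
  proof
    show "g \<in> borel_measurable borel"
      unfolding g_def[abs_def] using borel_measurable_continuous_onI[OF cw] by measurable
    show "\<bar>g x\<bar> \<le> M" for x
      using M[of "g x"] norm_sgn[of x] unfolding g_def by (cases "x = 0") auto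
    show "g (c *\<^sub>R x) = g x" if "c > 0" for c x
      using that unfolding g_def by (cases "x = 0") (auto simp: divide_simps)
  qed
  have "u x * v x = norm x ^ k * g x" for x
    using homogeneous_deg_eq_norm_power[OF homogeneous_deg_mult[OF pu(2) pv(2), folded k_def] k, of x]
    by (simp add: g_def)
  then have "0 = (real DIM('a) / (DIM('a) + k) - real DIM('a) / (DIM('a) + (k + 2))) * ball_integral 1"
    using integral_ball_weight_harmonic_product[OF u v \<open>d \<noteq> e\<close>] integral_ball_weight_norm_power[of k]
    by simp
  then have "ball_integral 1 = 0"
    by (simp add: frac_eq_eq)
  moreover have "(\<integral>x. u x * v x \<partial>sph) = (1 / measure lborel (ball (0::'a) 1)) * ball_integral 1"
    using integral_sph[OF borel_measurable_continuous_onI[OF cw]] by (simp add: ball_integral_def g_def)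
  ultimately show ?thesis by simp
qed

lemma integral_Complex:
  assumes "integrable M f" "integrable M g"
  shows "(\<integral>x. Complex (f x) (g x) \<partial>M) = Complex (\<integral>x. f x \<partial>M) (\<integral>x. g x \<partial>M)"
proof -
  have "(\<lambda>x. Complex (f x) (g x)) = (\<lambda>x. complex_of_real (f x) + \<i> * complex_of_real (g x))"
    by (simp add: fun_eq_iff complex_eq_iff)
  then show ?thesis
    using assms by (simp add: complex_eq_iff integrable_of_real)
qed

lemma sph_harmE:
  assumes "h \<in> sph_harm d"
  obtains p q where "harm_hom_poly d p" "harm_hom_poly d q"
    "\<And>x. x \<in> sphere 0 1 \<Longrightarrow> h x = Complex (p x) (q x)"
  using assms unfolding sph_harm_def by blast

lemma continuous_on_sph_harm:
  assumes "h \<in> sph_harm d"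
  shows "continuous_on (sphere 0 1) h"
proof -
  obtain p q where p: "harm_hom_poly d p" and q: "harm_hom_poly d q"
    and h: "\<And>x. x \<in> sphere 0 1 \<Longrightarrow> h x = Complex (p x) (q x)"
    using sph_harmE[OF assms] by blast
  have "continuous_on (sphere 0 1) (\<lambda>x. complex_of_real (p x) + \<i> * complex_of_real (q x))"
    using harm_hom_polyD(1)[OF p] harm_hom_polyD(1)[OF q]
    by (intro continuous_intros continuous_on_real_polynomial_function)
  then show ?thesis
    by (rule continuous_on_eq) (simp add: h complex_eq_iff)
qed

lemma integral_sph_harm_orthogonal:
  assumes "h \<in> sph_harm d" "h' \<in> sph_harm d'" "d \<noteq> d'"
  shows "(\<integral>x. h x * cnj (h' x) \<partial>sph) = 0"
proof -
  obtain p q where p: "harm_hom_poly d p" and q: "harm_hom_poly d q"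
    and h: "\<And>x. x \<in> sphere 0 1 \<Longrightarrow> h x = Complex (p x) (q x)"
    using sph_harmE[OF assms(1)] by blast
  obtain p' q' where p': "harm_hom_poly d' p'" and q': "harm_hom_poly d' q'"
    and h': "\<And>x. x \<in> sphere 0 1 \<Longrightarrow> h' x = Complex (p' x) (q' x)"
    using sph_harmE[OF assms(2)] by blast
  have int: "integrable sph (\<lambda>x. a x * b x)"
    if "harm_hom_poly d a" "harm_hom_poly d' b" for a b :: "'a \<Rightarrow> real"
    using harm_hom_polyD(1)[OF that(1)] harm_hom_polyD(1)[OF that(2)]
    by (intro integrable_sph_continuous continuous_intros continuous_on_real_polynomial_function)
  have "(\<integral>x. h x * cnj (h' x) \<partial>sph) =
      (\<integral>x. Complex (p x * p' x + q x * q' x) (q x * p' x - p x * q' x) \<partial>sph)"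
    by (intro Bochner_Integration.integral_cong) (auto simp: space_sph h h' complex_eq_iff)
  also have "\<dots> = 0"
    using p q p' q' int
    by (simp add: integral_Complex Bochner_Integration.integral_add Bochner_Integration.integral_diff
        integral_sph_harmonic_product[OF _ _ assms(3)] complex_eq_iff)
  finally show ?thesis .
qed

lemma is_sph_onb_orthonormal:
  assumes "is_sph_onb N \<psi>" "l < N d" "l' < N d'"
  shows "(\<integral>x. \<psi> d l x * cnj (\<psi> d' l' x) \<partial>sph) = (if (d, l) = (d', l') then 1 else 0)"
proof (cases "d = d'")
  case True
  then show ?thesis using assms unfolding is_sph_onb_def by auto
next
  case False
  have "\<psi> d l \<in> sph_harm d" "\<psi> d' l' \<in> sph_harm d'"
    using assms unfolding is_sph_onb_def by auto
  with False show ?thesis by (simp add: integral_sph_harm_orthogonal)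
qed

section \<open>Bessel's inequality and the Mellin bound\<close>

lemma integrable_mult_cnj_L2:
  fixes f g :: "'a \<Rightarrow> complex"
  assumes "f \<in> borel_measurable M" "g \<in> borel_measurable M"
    "integrable M (\<lambda>x. (cmod (f x))\<^sup>2)" "integrable M (\<lambda>x. (cmod (g x))\<^sup>2)"
  shows "integrable M (\<lambda>x. f x * cnj (g x))"
proof (rule Bochner_Integration.integrable_bound)
  show "integrable M (\<lambda>x. (cmod (f x))\<^sup>2 + (cmod (g x))\<^sup>2)" using assms by auto
  have "(\<lambda>x. cnj (g x)) \<in> borel_measurable M"
    by (rule measurable_compose[OF assms(2)]) (intro borel_measurable_continuous_onI continuous_intros)
  then show "(\<lambda>x. f x * cnj (g x)) \<in> borel_measurable M" using assms by (intro borel_measurable_times)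
  show "AE x in M. norm (f x * cnj (g x)) \<le> norm ((cmod (f x))\<^sup>2 + (cmod (g x))\<^sup>2)"
  proof (intro AE_I2)
    fix x
    have "cmod (f x) * cmod (g x) \<le> (cmod (f x))\<^sup>2 + (cmod (g x))\<^sup>2"
      using sum_squares_bound[of "cmod (f x)" "cmod (g x)"] mult_nonneg_nonneg[OF norm_ge_zero norm_ge_zero, of "f x" "g x"]
      by linarith
    then show "norm (f x * cnj (g x)) \<le> norm ((cmod (f x))\<^sup>2 + (cmod (g x))\<^sup>2)"
      by (simp add: norm_mult)
  qed
qed

lemma mult_cnj_diff_sum:
  fixes F :: complex and c \<phi> :: "'i \<Rightarrow> complex"
  shows "(F - (\<Sum>i\<in>J. c i * \<phi> i)) * cnj (F - (\<Sum>i\<in>J. c i * \<phi> i)) = F * cnj F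
    - (\<Sum>j\<in>J. cnj (c j) * (F * cnj (\<phi> j))) - (\<Sum>i\<in>J. c i * (\<phi> i * cnj F))
    + (\<Sum>i\<in>J. \<Sum>j\<in>J. c i * cnj (c j) * (\<phi> i * cnj (\<phi> j)))"
  by (simp add: algebra_simps sum_distrib_left sum_distrib_right sum_subtractf cnj_sum sum.distrib sum_negf)
    (rule sum.swap)

context
  fixes M :: "'a measure" and F :: "'a \<Rightarrow> complex" and \<phi> :: "'i \<Rightarrow> 'a \<Rightarrow> complex" and J :: "'i set"
  assumes J: "finite J"
    and Fm: "F \<in> borel_measurable M" and F2: "integrable M (\<lambda>x. (cmod (F x))\<^sup>2)"
    and \<phi>m: "\<And>i. i \<in> J \<Longrightarrow> \<phi> i \<in> borel_measurable M"
    and \<phi>2: "\<And>i. i \<in> J \<Longrightarrow> integrable M (\<lambda>x. (cmod (\<phi> i x))\<^sup>2)"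
    and orth: "\<And>i j. i \<in> J \<Longrightarrow> j \<in> J \<Longrightarrow> (\<integral>x. \<phi> i x * cnj (\<phi> j x) \<partial>M) = (if i = j then 1 else 0)"
begin

lemma integral_orthonormal_cross_terms:
  shows "(\<integral>x. (\<Sum>j\<in>J. cnj (c j) * (F x * cnj (\<phi> j x))) \<partial>M)
      = (\<Sum>j\<in>J. cnj (c j) * (\<integral>x. F x * cnj (\<phi> j x) \<partial>M))"
    and "(\<integral>x. (\<Sum>i\<in>J. c i * (\<phi> i x * cnj (F x))) \<partial>M)
      = (\<Sum>i\<in>J. c i * cnj (\<integral>x. F x * cnj (\<phi> i x) \<partial>M))"
    and "(\<integral>x. (\<Sum>i\<in>J. \<Sum>j\<in>J. c i * cnj (c j) * (\<phi> i x * cnj (\<phi> j x))) \<partial>M) = (\<Sum>i\<in>J. c i * cnj (c i))"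
proof -
  have iF\<phi>: "integrable M (\<lambda>x. F x * cnj (\<phi> i x))" if "i \<in> J" for i
    using integrable_mult_cnj_L2[OF Fm \<phi>m[OF that] F2 \<phi>2[OF that]] .
  have i\<phi>F: "integrable M (\<lambda>x. \<phi> i x * cnj (F x))" if "i \<in> J" for i
    using integrable_mult_cnj_L2[OF \<phi>m[OF that] Fm \<phi>2[OF that] F2] .
  have i\<phi>\<phi>: "integrable M (\<lambda>x. \<phi> i x * cnj (\<phi> j x))" if "i \<in> J" "j \<in> J" for i j
    using integrable_mult_cnj_L2[OF \<phi>m[OF that(1)] \<phi>m[OF that(2)] \<phi>2[OF that(1)] \<phi>2[OF that(2)]] .
  show "(\<integral>x. (\<Sum>j\<in>J. cnj (c j) * (F x * cnj (\<phi> j x))) \<partial>M)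
      = (\<Sum>j\<in>J. cnj (c j) * (\<integral>x. F x * cnj (\<phi> j x) \<partial>M))"
    using iF\<phi> by (subst Bochner_Integration.integral_sum) auto
  have "(\<integral>x. \<phi> i x * cnj (F x) \<partial>M) = cnj (\<integral>x. F x * cnj (\<phi> i x) \<partial>M)" for i
    by (subst Bochner_Integration.integral_cnj[symmetric]) (simp add: mult.commute)
  then show "(\<integral>x. (\<Sum>i\<in>J. c i * (\<phi> i x * cnj (F x))) \<partial>M)
      = (\<Sum>i\<in>J. c i * cnj (\<integral>x. F x * cnj (\<phi> i x) \<partial>M))"
    using i\<phi>F by (subst Bochner_Integration.integral_sum) auto
  have "(\<integral>x. (\<Sum>i\<in>J. \<Sum>j\<in>J. c i * cnj (c j) * (\<phi> i x * cnj (\<phi> j x))) \<partial>M)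
      = (\<Sum>i\<in>J. \<Sum>j\<in>J. c i * cnj (c j) * (if i = j then 1 else 0))"
    using i\<phi>\<phi> orth
    by (subst Bochner_Integration.integral_sum, force intro!: Bochner_Integration.integrable_sum integrable_mult_right)
       (auto intro!: sum.cong simp: Bochner_Integration.integral_sum)
  also have "\<dots> = (\<Sum>i\<in>J. c i * cnj (c i))"
    using J by (simp add: if_distrib sum.delta cong: if_cong)
  finally show "(\<integral>x. (\<Sum>i\<in>J. \<Sum>j\<in>J. c i * cnj (c j) * (\<phi> i x * cnj (\<phi> j x))) \<partial>M) = (\<Sum>i\<in>J. c i * cnj (c i))" .
qed

lemma integral_cmod_power2_orthonormal_residual:
  "(\<integral>x. (cmod (F x - (\<Sum>i\<in>J. (\<integral>y. F y * cnj (\<phi> i y) \<partial>M) * \<phi> i x)))\<^sup>2 \<partial>M)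
    = (\<integral>x. (cmod (F x))\<^sup>2 \<partial>M) - (\<Sum>i\<in>J. (cmod (\<integral>x. F x * cnj (\<phi> i x) \<partial>M))\<^sup>2)"
proof -
  define c where "c i = (\<integral>x. F x * cnj (\<phi> i x) \<partial>M)" for i
  have int: "integrable M (\<lambda>x. F x * cnj (\<phi> i x))" "integrable M (\<lambda>x. \<phi> i x * cnj (F x))"
    "integrable M (\<lambda>x. \<phi> i x * cnj (\<phi> j x))" if "i \<in> J" "j \<in> J" for i j
    using that integrable_mult_cnj_L2 Fm F2 \<phi>m \<phi>2 by blast+
  have "complex_of_real (\<integral>x. (cmod (F x - (\<Sum>i\<in>J. c i * \<phi> i x)))\<^sup>2 \<partial>M)
      = (\<integral>x. (F x - (\<Sum>i\<in>J. c i * \<phi> i x)) * cnj (F x - (\<Sum>i\<in>J. c i * \<phi> i x)) \<partial>M)"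
    by (simp only: integral_complex_of_real[symmetric] complex_norm_square)
  also have "\<dots> = (\<integral>x. F x * cnj (F x) \<partial>M) - (\<Sum>j\<in>J. cnj (c j) * c j) - (\<Sum>i\<in>J. c i * cnj (c i))
        + (\<Sum>i\<in>J. c i * cnj (c i))"
    unfolding mult_cnj_diff_sum
    using integrable_mult_cnj_L2[OF Fm Fm F2 F2] int integral_orthonormal_cross_terms[of c]
    by (simp add: c_def Bochner_Integration.integral_diff Bochner_Integration.integral_add
        Bochner_Integration.integrable_diff Bochner_Integration.integrable_add integrable_mult_right)
  also have "(\<integral>x. F x * cnj (F x) \<partial>M) = complex_of_real (\<integral>x. (cmod (F x))\<^sup>2 \<partial>M)"
    by (simp only: complex_norm_square[symmetric] integral_complex_of_real)
  also have "\<dots> - (\<Sum>j\<in>J. cnj (c j) * c j) - (\<Sum>i\<in>J. c i * cnj (c i)) + (\<Sum>i\<in>J. c i * cnj (c i))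
      = complex_of_real ((\<integral>x. (cmod (F x))\<^sup>2 \<partial>M) - (\<Sum>i\<in>J. (cmod (c i))\<^sup>2))"
    by (simp add: complex_norm_square[symmetric] mult.commute[of "cnj _"])
  finally show ?thesis
    unfolding c_def using of_real_eq_iff by blast
qed

lemma Bessel_inequality:
  "(\<Sum>i\<in>J. (cmod (\<integral>x. F x * cnj (\<phi> i x) \<partial>M))\<^sup>2) \<le> (\<integral>x. (cmod (F x))\<^sup>2 \<partial>M)"
  using integral_cmod_power2_orthonormal_residual
    Bochner_Integration.integral_nonneg[of M "\<lambda>x. (cmod (F x - (\<Sum>i\<in>J. (\<integral>y. F y * cnj (\<phi> i y) \<partial>M) * \<phi> i x)))\<^sup>2"]
  by simp

end

text \<open>Bessel's inequality for the single normalised function \<open>g / \<parallel>g\<parallel>\<close>.\<close>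
lemma Cauchy_Schwarz_L2:
  fixes F g :: "'a \<Rightarrow> complex"
  assumes Fm: "F \<in> borel_measurable M" and gm: "g \<in> borel_measurable M"
    and F2: "integrable M (\<lambda>x. (cmod (F x))\<^sup>2)" and g2: "integrable M (\<lambda>x. (cmod (g x))\<^sup>2)"
    and pos: "0 < (\<integral>x. (cmod (g x))\<^sup>2 \<partial>M)"
  shows "(cmod (\<integral>x. F x * cnj (g x) \<partial>M))\<^sup>2 \<le> (\<integral>x. (cmod (F x))\<^sup>2 \<partial>M) * (\<integral>x. (cmod (g x))\<^sup>2 \<partial>M)"
proof -
  define A where "A = (\<integral>x. (cmod (g x))\<^sup>2 \<partial>M)"
  define c where "c = sqrt A"
  have c0: "c > 0" using pos unfolding c_def A_def by simp
  have cc: "c * c = A" using pos unfolding c_def A_def by simp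
  define \<phi> where "\<phi> = (\<lambda>(_::unit) x. g x / complex_of_real c)"
  have \<phi>m: "\<phi> i \<in> borel_measurable M" for i unfolding \<phi>_def using gm by auto
  have \<phi>2: "integrable M (\<lambda>x. (cmod (\<phi> i x))\<^sup>2)" for i
    unfolding \<phi>_def using g2 c0 by (simp add: norm_divide power_divide)
  have orth: "(\<integral>x. \<phi> i x * cnj (\<phi> j x) \<partial>M) = (if i = j then 1 else 0)" for i j
  proof -
    have "(\<integral>x. \<phi> i x * cnj (\<phi> j x) \<partial>M) = (\<integral>x. complex_of_real ((cmod (g x))\<^sup>2) / complex_of_real (c * c) \<partial>M)"
    proof -
      have "\<phi> i x * cnj (\<phi> j x) = complex_of_real ((cmod (g x))\<^sup>2) / complex_of_real (c * c)" for x
        unfolding \<phi>_def complex_norm_square by (simp add: field_simps)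
      then show ?thesis by simp
    qed
    also have "\<dots> = complex_of_real A / complex_of_real (c * c)"
      unfolding A_def by (simp only: integral_divide_zero integral_complex_of_real)
    also have "\<dots> = 1" using cc c0 pos unfolding A_def by simp
    finally show ?thesis by simp
  qed
  have "(\<Sum>i\<in>{()}. (cmod (\<integral>x. F x * cnj (\<phi> i x) \<partial>M))\<^sup>2) \<le> (\<integral>x. (cmod (F x))\<^sup>2 \<partial>M)"
    by (rule Bessel_inequality[OF _ Fm F2 \<phi>m \<phi>2 orth]) auto
  moreover have "(\<integral>x. F x * cnj (\<phi> () x) \<partial>M) = (\<integral>x. F x * cnj (g x) \<partial>M) / complex_of_real c"
    unfolding \<phi>_def by simp
  ultimately have "(cmod (\<integral>x. F x * cnj (g x) \<partial>M))\<^sup>2 / (c * c) \<le> (\<integral>x. (cmod (F x))\<^sup>2 \<partial>M)"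
    using c0 by (simp add: norm_divide power_divide power2_eq_square)
  then show ?thesis using cc c0 pos unfolding A_def by (simp add: divide_le_eq mult.commute split: if_splits)
qed


lemma has_bochner_integral_powr_atLeast:
  fixes p r :: real
  assumes p: "p < -1" and r: "r > 0"
  shows "has_bochner_integral lborel (\<lambda>y. indicator {r..} y * y powr p) (r powr (p + 1) / - (p + 1))"
proof -
  have "(\<integral>\<^sup>+y. ennreal (indicator {r..} y * y powr p) \<partial>lborel) = (\<integral>\<^sup>+y\<in>{r..}. ennreal (y powr p) \<partial>lborel)"
    by (intro nn_integral_cong) (auto simp: indicator_def)
  also have "\<dots> = ennreal (0 - r powr (p + 1) / (p + 1))"
  proof (rule nn_integral_FTC_atLeast)
    fix x assume "r \<le> x"
    then have x: "x > 0" using r by simp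
    have "((\<lambda>y. y powr (p + 1) / (p + 1)) has_real_derivative ((p + 1) * x powr (p + 1 - 1)) / (p + 1)) (at x)"
      by (intro DERIV_cdivide has_real_derivative_powr x)
    then show "((\<lambda>y. y powr (p + 1) / (p + 1)) has_real_derivative x powr p) (at x)"
      using p by simp
  next
    have "((\<lambda>y. y powr (p + 1)) \<longlongrightarrow> 0) at_top"
      using p by (intro tendsto_neg_powr filterlim_ident) auto
    then show "((\<lambda>y. y powr (p + 1) / (p + 1)) \<longlongrightarrow> 0) at_top"
      using tendsto_divide_zero by blast
  qed auto
  finally show ?thesis
    using p by (intro has_bochner_integral_nn_integral) (auto simp: minus_divide_right)
qed

lemma Pd_nonneg_le_1:
  assumes "real n / 2 < s" "s < real n"
  shows "0 \<le> Pd n d s" "Pd n d s \<le> 1"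
proof -
  have "0 \<le> (real n - s + real i) / (s + real i) \<and> (real n - s + real i) / (s + real i) \<le> 1" for i
    using assms by (auto simp: divide_le_eq_1)
  then show "0 \<le> Pd n d s" "Pd n d s \<le> 1"
    unfolding Pd_def by (auto intro: prod_nonneg prod_le_1)
qed

text \<open>The value of \<open>\<integral>\<^sub>r\<^sup>\<infinity> y\<^bsup>n - 2s - 1\<^esup> dy\<close> for \<open>n < 2s\<close>.\<close>
definition mellin_tail_const :: "real \<Rightarrow> real \<Rightarrow> real \<Rightarrow> real" where
  "mellin_tail_const n r s = r powr (n - 2 * s) / (2 * s - n)"

lemma has_bochner_integral_mellin_tail:
  assumes r: "0 < r" and s: "n < 2 * s"
  shows "has_bochner_integral lborel (\<lambda>y. (indicator {r..} y * y powr ((n + 1) / 2 - s - 1))\<^sup>2)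
    (mellin_tail_const n r s)"
proof -
  have "(indicator {r..} y * y powr ((n + 1) / 2 - s - 1))\<^sup>2 = indicator {r..} y * y powr (n - 2 * s - 1)"
    for y :: real
    using r by (cases "r \<le> y") (simp_all add: power2_eq_square powr_add[symmetric] algebra_simps)
  then show ?thesis
    using has_bochner_integral_powr_atLeast[of "n - 2 * s - 1" r] r s
    by (simp add: mellin_tail_const_def)
qed

lemma mellin_cong: "(\<And>y. 0 < y \<Longrightarrow> F y = G y) \<Longrightarrow> mellin F s = mellin G s"
  unfolding mellin_def by (intro set_lebesgue_integral_cong) auto

lemma norm_mellin_power2_le:
  fixes F :: "real \<Rightarrow> complex"
  assumes r: "0 < r" and s: "n < 2 * s" and F: "F \<in> borel_measurable lborel"
    and vanish: "\<And>y. 0 < y \<Longrightarrow> y < r \<Longrightarrow> F y = 0"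
    and int: "integrable lborel (\<lambda>y. indicator {r..} y * ((cmod (F y))\<^sup>2 * y powr - (n + 1)))"
  shows "(cmod (mellin F s))\<^sup>2
    \<le> mellin_tail_const n r s * (\<integral>y. indicator {r..} y * ((cmod (F y))\<^sup>2 * y powr - (n + 1)) \<partial>lborel)"
proof -
  define a where "a y = complex_of_real (indicator {r..} y * y powr (- (n + 1) / 2)) * F y" for y
  define b where "b y = complex_of_real (indicator {r..} y * y powr ((n + 1) / 2 - s - 1))" for y
  have "indicator {0<..} y *\<^sub>R (F y * complex_of_real (y powr - (s + 1))) = a y * cnj (b y)" for y
  proof (cases "r \<le> y")
    case True
    have "- (n + 1) / 2 + ((n + 1) / 2 - s - 1) = - (s + 1)"
      by (simp add: field_simps)
    then have "y powr (- (n + 1) / 2) * y powr ((n + 1) / 2 - s - 1) = y powr - (s + 1)"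
      by (metis powr_add)
    then show ?thesis
      using True r unfolding a_def b_def by (simp add: mult_ac flip: of_real_mult)
  qed (use vanish in \<open>auto simp: a_def b_def indicator_def\<close>)
  then have mellin: "mellin F s = (\<integral>y. a y * cnj (b y) \<partial>lborel)"
    by (simp add: mellin_def set_lebesgue_integral_def)
  have a2: "(cmod (a y))\<^sup>2 = indicator {r..} y * ((cmod (F y))\<^sup>2 * y powr - (n + 1))" for y
  proof (cases "r \<le> y")
    case True
    then have "(y powr (- (n + 1) / 2))\<^sup>2 = y powr - (n + 1)"
      using r by (simp add: power2_eq_square powr_add[symmetric])
    with True show ?thesis unfolding a_def by (simp add: norm_mult power_mult_distrib)
  qed (simp add: a_def)
  have tail: "has_bochner_integral lborel (\<lambda>y. (cmod (b y))\<^sup>2) (mellin_tail_const n r s)"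
    using has_bochner_integral_mellin_tail[OF r s] by (simp add: b_def power2_abs del: of_real_mult)
  have "(cmod (\<integral>y. a y * cnj (b y) \<partial>lborel))\<^sup>2
      \<le> (\<integral>y. (cmod (a y))\<^sup>2 \<partial>lborel) * (\<integral>y. (cmod (b y))\<^sup>2 \<partial>lborel)"
  proof (rule Cauchy_Schwarz_L2)
    show "a \<in> borel_measurable lborel" "b \<in> borel_measurable lborel"
      unfolding a_def[abs_def] b_def[abs_def] using F by measurable
    show "integrable lborel (\<lambda>y. (cmod (a y))\<^sup>2)" "integrable lborel (\<lambda>y. (cmod (b y))\<^sup>2)"
      using int integrable.intros[OF tail] by (simp_all add: a2)
    show "0 < (\<integral>y. (cmod (b y))\<^sup>2 \<partial>lborel)"
      using tail r s by (simp add: has_bochner_integral_integral_eq mellin_tail_const_def)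
  qed
  then show ?thesis
    using tail by (simp add: mellin a2 has_bochner_integral_integral_eq mult.commute)
qed

section \<open>Functions with bounded support on the cone\<close>

lemma sets_borel_lcone: "(lcone :: ('a::euclidean_space \<times> real) set) \<in> sets borel"
proof -
  have eq: "lcone = {p::'a \<times> real. norm (fst p) = snd p} \<inter> {p. 0 < snd p}"
    by (auto simp: lcone_def)
  have "closed {p::'a \<times> real. norm (fst p) = snd p}" "open {p::'a \<times> real. 0 < snd p}"
    by (intro closed_Collect_eq open_Collect_less continuous_intros)+
  then show ?thesis
    unfolding eq by (intro sets.Int borel_closed borel_open[of "{p. 0 < snd p}"])
qed

lemma measurable_cone_polar:
  "(\<lambda>p::real \<times> 'a::euclidean_space. ((1 / fst p) *\<^sub>R snd p, 1 / fst p)) \<in> measurable (lborel \<Otimes>\<^sub>M sph) borel"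
proof -
  have "(\<lambda>p::real \<times> 'a. snd p) \<in> measurable (lborel \<Otimes>\<^sub>M sph) borel"
    by (rule measurable_compose[OF measurable_snd]) (simp add: measurable_sph_iff measurable_restrict_space1)
  moreover have "(\<lambda>p::real \<times> 'a. 1 / fst p) \<in> borel_measurable (lborel \<Otimes>\<^sub>M sph)"
    using measurable_fst[of lborel sph] by (simp add: measurable_lborel2)
  ultimately show ?thesis
    by (subst borel_prod[symmetric]) (intro measurable_Pair borel_measurable_scaleR)
qed

locale cone_function =
  fixes N :: "nat \<Rightarrow> nat" and \<psi> :: "nat \<Rightarrow> nat \<Rightarrow> 'a::euclidean_space \<Rightarrow> complex"
    and f :: "'a \<times> real \<Rightarrow> complex" and K R :: real
  assumes onb: "is_sph_onb N \<psi>"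
    and measurable: "f \<in> borel_measurable (restrict_space borel lcone)"
    and bounded: "\<And>x. x \<in> lcone \<Longrightarrow> cmod (f x) \<le> K" and K: "0 \<le> K"
    and support: "\<And>x. x \<in> lcone \<Longrightarrow> f x \<noteq> 0 \<Longrightarrow> norm x \<le> R" and R: "0 < R"
begin

text \<open>This is \<open>fpol f\<close> extended by zero off the cone, which makes it jointly measurable.\<close>
definition f_polar :: "real \<Rightarrow> 'a \<Rightarrow> complex" where
  "f_polar y \<omega> = (if ((1 / y) *\<^sub>R \<omega>, 1 / y) \<in> lcone then f ((1 / y) *\<^sub>R \<omega>, 1 / y) else 0)"

definition coeff :: "nat \<Rightarrow> nat \<Rightarrow> real \<Rightarrow> complex" where
  "coeff d l y = (\<integral>\<omega>. f_polar y \<omega> * cnj (\<psi> d l \<omega>) \<partial>sph)"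

definition sphere_L2 :: "real \<Rightarrow> real" where
  "sphere_L2 y = (\<integral>\<omega>. (cmod (f_polar y \<omega>))\<^sup>2 \<partial>sph)"

definition coeff_L2 :: "nat \<Rightarrow> nat \<Rightarrow> real" where
  "coeff_L2 d l = (\<integral>y. indicator {1 / R..} y * ((cmod (coeff d l y))\<^sup>2 * y powr - (real (DIM('a) - 1) + 1)) \<partial>lborel)"

lemma measurable_f_polar: "(\<lambda>p. f_polar (fst p) (snd p)) \<in> borel_measurable (lborel \<Otimes>\<^sub>M sph)"
proof -
  have "(\<lambda>x. if x \<in> lcone then f x else 0) \<in> borel_measurable borel"
    by (subst measurable_restrict_space_iff[symmetric]) (use measurable sets_borel_lcone in simp_all)
  from measurable_compose[OF measurable_cone_polar this] show ?thesis
    by (simp add: f_polar_def[abs_def])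
qed

lemma norm_f_polar_le: "cmod (f_polar y \<omega>) \<le> K"
  using bounded K by (simp add: f_polar_def)

lemma f_polar_eq_0: "y < 1 / R \<Longrightarrow> f_polar y \<omega> = 0"
proof (rule ccontr)
  assume "y < 1 / R" "f_polar y \<omega> \<noteq> 0"
  then have in_cone: "((1 / y) *\<^sub>R \<omega>, 1 / y) \<in> lcone" and "f ((1 / y) *\<^sub>R \<omega>, 1 / y) \<noteq> 0"
    by (auto simp: f_polar_def split: if_splits)
  moreover have y: "y > 0"
    using in_cone by (simp add: lcone_def)
  ultimately have "1 / y \<le> R"
    using support norm_snd_le[of "1 / y" "(1 / y) *\<^sub>R \<omega>"] by fastforce
  with \<open>y < 1 / R\<close> R y show False
    by (simp add: field_simps)
qed

lemma fpol_eq_f_polar: "0 < y \<Longrightarrow> \<omega> \<in> sphere 0 1 \<Longrightarrow> fpol f y \<omega> = f_polar y \<omega>"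
  by (auto simp: fpol_def f_polar_def lcone_def)

lemma continuous_on_psi: "l < N d \<Longrightarrow> continuous_on (sphere 0 1) (\<psi> d l)"
  using onb continuous_on_sph_harm unfolding is_sph_onb_def by blast

lemma measurable_psi: "l < N d \<Longrightarrow> \<psi> d l \<in> borel_measurable sph"
  by (simp add: measurable_sph_iff borel_measurable_continuous_on_restrict continuous_on_psi)

lemma integrable_psi_power2: "l < N d \<Longrightarrow> integrable sph (\<lambda>\<omega>. (cmod (\<psi> d l \<omega>))\<^sup>2)"
  by (intro integrable_sph_continuous continuous_intros continuous_on_psi)

lemma measurable_f_polar_slice: "f_polar y \<in> borel_measurable sph"
  using measurable_Pair2[OF measurable_f_polar, of y] by simp

lemma integrable_f_polar_power2: "integrable sph (\<lambda>\<omega>. (cmod (f_polar y \<omega>))\<^sup>2)"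
  using measurable_f_polar_slice norm_f_polar_le K
  by (intro finite_measure.integrable_const_bound[OF finite_measure_sph, where B = "K\<^sup>2"])
    (auto intro!: power_mono)

lemma Bessel_coeff:
  assumes "finite J" "\<And>d l. (d, l) \<in> J \<Longrightarrow> l < N d"
  shows "(\<Sum>(d, l)\<in>J. (cmod (coeff d l y))\<^sup>2) \<le> sphere_L2 y"
  using Bessel_inequality[OF assms(1) measurable_f_polar_slice integrable_f_polar_power2,
      of "\<lambda>(d, l). \<psi> d l"] assms(2) measurable_psi integrable_psi_power2 is_sph_onb_orthonormal[OF onb]
  by (force simp: coeff_def sphere_L2_def case_prod_beta')

lemma measurable_coeff: "l < N d \<Longrightarrow> coeff d l \<in> borel_measurable lborel"
proof -
  assume "l < N d"
  then have "(\<lambda>p. \<psi> d l (snd p)) \<in> borel_measurable (lborel \<Otimes>\<^sub>M sph)"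
    by (rule measurable_compose[OF measurable_snd measurable_psi])
  then have "(\<lambda>p. cnj (\<psi> d l (snd p))) \<in> borel_measurable (lborel \<Otimes>\<^sub>M sph)"
    by (rule measurable_compose) (intro borel_measurable_continuous_onI continuous_intros)
  then have "(\<lambda>p. f_polar (fst p) (snd p) * cnj (\<psi> d l (snd p))) \<in> borel_measurable (lborel \<Otimes>\<^sub>M sph)"
    using measurable_f_polar by (intro borel_measurable_times)
  then have "(\<lambda>(y, \<omega>). f_polar y \<omega> * cnj (\<psi> d l \<omega>)) \<in> borel_measurable (lborel \<Otimes>\<^sub>M sph)"
    by (simp add: case_prod_beta')
  then show ?thesis
    unfolding coeff_def[abs_def]
    by (rule sigma_finite_measure.borel_measurable_lebesgue_integral[rotated])
      (use finite_measure_sph finite_measure.axioms(1) in blast)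
qed

lemma measurable_sphere_L2: "sphere_L2 \<in> borel_measurable lborel"
proof -
  have "(\<lambda>(y, \<omega>). (cmod (f_polar y \<omega>))\<^sup>2) \<in> borel_measurable (lborel \<Otimes>\<^sub>M sph)"
    using measurable_f_polar by (simp add: case_prod_beta')
  then show ?thesis
    unfolding sphere_L2_def[abs_def]
    by (rule sigma_finite_measure.borel_measurable_lebesgue_integral[rotated])
      (use finite_measure_sph finite_measure.axioms(1) in blast)
qed

lemma measurable_coeff_power2:
  assumes "l < N d"
  shows "(\<lambda>y. (cmod (coeff d l y))\<^sup>2) \<in> borel_measurable lborel"
  using measurable_compose[OF measurable_coeff[OF assms] borel_measurable_norm]
  by (rule borel_measurable_power)

lemma sphere_L2_nonneg: "0 \<le> sphere_L2 y"
  unfolding sphere_L2_def by (rule Bochner_Integration.integral_nonneg) simp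

lemma sphere_L2_le: "sphere_L2 y \<le> K\<^sup>2"
proof -
  have "sphere_L2 y \<le> (\<integral>\<omega>. K\<^sup>2 \<partial>(sph :: 'a measure))"
    unfolding sphere_L2_def
    using finite_measure.integrable_const[OF finite_measure_sph] integrable_f_polar_power2 norm_f_polar_le K
    by (intro Bochner_Integration.integral_mono) (auto intro!: power_mono)
  also have "\<dots> = K\<^sup>2"
    using emeasure_sph_space[where 'a = 'a] by (simp add: measure_def)
  finally show ?thesis .
qed

lemma coeff_power2_le: "l < N d \<Longrightarrow> (cmod (coeff d l y))\<^sup>2 \<le> K\<^sup>2"
  using Bessel_coeff[of "{(d, l)}" y] sphere_L2_le[of y] by simp

lemma coeff_eq_0: "y < 1 / R \<Longrightarrow> coeff d l y = 0"
  by (simp add: coeff_def f_polar_eq_0)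

lemma sphere_L2_eq_0: "y < 1 / R \<Longrightarrow> sphere_L2 y = 0"
  by (simp add: sphere_L2_def f_polar_eq_0)

lemma fdl_eq_coeff: "0 < y \<Longrightarrow> fdl \<psi> f d l y = coeff d l y"
  unfolding fdl_def coeff_def
  by (rule Bochner_Integration.integral_cong[OF refl]) (simp add: space_sph fpol_eq_f_polar)

lemma integrable_tail_weighted:
  assumes n: "0 < real (DIM('a) - 1)"
    and h: "h \<in> borel_measurable lborel" "\<And>y. \<bar>h y\<bar> \<le> B"
  shows "integrable lborel (\<lambda>y. indicator {1 / R..} y * (h y * y powr - (real (DIM('a) - 1) + 1)))"
proof (rule Bochner_Integration.integrable_bound)
  show "integrable lborel (\<lambda>y. B * (indicator {1 / R..} y * y powr - (real (DIM('a) - 1) + 1)))"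
    using integrable.intros[OF has_bochner_integral_powr_atLeast[of "- (real (DIM('a) - 1) + 1)" "1 / R"]] n R
    by (intro integrable_mult_right) simp
  show "AE y in lborel. norm (indicator {1 / R..} y * (h y * y powr - (real (DIM('a) - 1) + 1)))
      \<le> norm (B * (indicator {1 / R..} y * y powr - (real (DIM('a) - 1) + 1)))"
    using h(2) by (intro AE_I2) (auto simp: indicator_def abs_mult intro!: mult_right_mono order_trans[OF _ abs_ge_self])
qed (use h(1) in measurable)

lemma L2sq_cone_eq:
  "L2sq_cone f = (\<integral>y. indicator {1 / R..} y * (sphere_L2 y * y powr - (real (DIM('a) - 1) + 1)) \<partial>lborel)"
proof -
  have "(\<lambda>y. indicator {0<..} y *\<^sub>R ((\<integral>\<omega>. (cmod (fpol f y \<omega>))\<^sup>2 \<partial>sph) * y powr - (real (DIM('a) - 1) + 1)))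
      = (\<lambda>y. indicator {1 / R..} y * (sphere_L2 y * y powr - (real (DIM('a) - 1) + 1)))"
  proof
    fix y :: real
    show "indicator {0<..} y *\<^sub>R ((\<integral>\<omega>. (cmod (fpol f y \<omega>))\<^sup>2 \<partial>sph) * y powr - (real (DIM('a) - 1) + 1))
      = indicator {1 / R..} y * (sphere_L2 y * y powr - (real (DIM('a) - 1) + 1))"
    proof (cases "y > 0")
      case True
      then have "(\<integral>\<omega>. (cmod (fpol f y \<omega>))\<^sup>2 \<partial>sph) = sphere_L2 y"
        unfolding sphere_L2_def
        by (intro Bochner_Integration.integral_cong) (simp_all add: space_sph fpol_eq_f_polar)
      with True show ?thesis
        using sphere_L2_eq_0[of y] by (auto simp: indicator_def)
    next
      case False
      with R have "y < 1 / R"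
        by (smt (verit) divide_pos_pos)
      with False show ?thesis
        by (simp add: indicator_def sphere_L2_eq_0)
    qed
  qed
  then show ?thesis
    unfolding L2sq_cone_def set_lebesgue_integral_def by (simp only:)
qed

lemma sum_coeff_L2_le:
  assumes n: "0 < real (DIM('a) - 1)"
    and J: "finite J" "\<And>d l. (d, l) \<in> J \<Longrightarrow> l < N d"
  shows "(\<Sum>(d, l)\<in>J. coeff_L2 d l) \<le> L2sq_cone f"
proof -
  let ?w = "\<lambda>y. indicator {1 / R..} y * y powr - (real (DIM('a) - 1) + 1)"
  have int: "integrable lborel (\<lambda>y. indicator {1 / R..} y * ((cmod (coeff d l y))\<^sup>2 * y powr - (real (DIM('a) - 1) + 1)))"
    if "(d, l) \<in> J" for d l
    using J(2)[OF that] by (intro integrable_tail_weighted[OF n, where B = "K\<^sup>2"] measurable_coeff_power2) (auto simp: coeff_power2_le)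
  have "(\<Sum>(d, l)\<in>J. coeff_L2 d l)
      = (\<integral>y. (\<Sum>(d, l)\<in>J. indicator {1 / R..} y * ((cmod (coeff d l y))\<^sup>2
          * y powr - (real (DIM('a) - 1) + 1))) \<partial>lborel)"
    unfolding coeff_L2_def
    by (subst Bochner_Integration.integral_sum) (use int in \<open>auto simp: case_prod_beta'\<close>)
  also have "\<dots> = (\<integral>y. ?w y * (\<Sum>(d, l)\<in>J. (cmod (coeff d l y))\<^sup>2) \<partial>lborel)"
    by (simp add: case_prod_beta' sum_distrib_left mult_ac)
  also have "\<dots> \<le> (\<integral>y. indicator {1 / R..} y * (sphere_L2 y * y powr - (real (DIM('a) - 1) + 1)) \<partial>lborel)"
  proof (rule Bochner_Integration.integral_mono)
    show "integrable lborel (\<lambda>y. ?w y * (\<Sum>(d, l)\<in>J. (cmod (coeff d l y))\<^sup>2))"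
      using int by (auto simp: sum_distrib_left case_prod_beta' mult_ac intro!: Bochner_Integration.integrable_sum)
    show "integrable lborel (\<lambda>y. indicator {1 / R..} y * (sphere_L2 y * y powr - (real (DIM('a) - 1) + 1)))"
      using sphere_L2_nonneg sphere_L2_le
      by (intro integrable_tail_weighted[OF n measurable_sphere_L2]) (simp add: abs_of_nonneg)
    show "?w y * (\<Sum>(d, l)\<in>J. (cmod (coeff d l y))\<^sup>2)
        \<le> indicator {1 / R..} y * (sphere_L2 y * y powr - (real (DIM('a) - 1) + 1))" for y
      using mult_right_mono[OF Bessel_coeff[OF J, of y] powr_ge_zero[of y "- (real (DIM('a) - 1) + 1)"]]
      by (simp add: indicator_def mult_ac)
  qed
  finally show ?thesis
    by (simp only: L2sq_cone_eq)
qed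

lemma norm_mellin_fdl_power2_le:
  assumes s: "real (DIM('a) - 1) < 2 * s" and n: "0 < real (DIM('a) - 1)" and l: "l < N d"
  shows "(cmod (mellin (fdl \<psi> f d l) s))\<^sup>2 \<le> mellin_tail_const (real (DIM('a) - 1)) (1 / R) s * coeff_L2 d l"
proof -
  have "(cmod (mellin (coeff d l) s))\<^sup>2 \<le> mellin_tail_const (real (DIM('a) - 1)) (1 / R) s * coeff_L2 d l"
    unfolding coeff_L2_def
  proof (rule norm_mellin_power2_le)
    show "integrable lborel
        (\<lambda>y. indicator {1 / R..} y * ((cmod (coeff d l y))\<^sup>2 * y powr - (real (DIM('a) - 1) + 1)))"
      using l by (intro integrable_tail_weighted[OF n, where B = "K\<^sup>2"] measurable_coeff_power2) (auto simp: coeff_power2_le)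
  qed (use R s measurable_coeff[OF l] in \<open>simp_all add: coeff_eq_0 measurable_lborel1\<close>)
  moreover have "mellin (fdl \<psi> f d l) s = mellin (coeff d l) s"
    by (rule mellin_cong) (rule fdl_eq_coeff)
  ultimately show ?thesis by simp
qed

lemma norm_Mff_le:
  assumes s: "real (DIM('a) - 1) / 2 < s" "s < real (DIM('a) - 1)"
  shows "cmod (Mff N \<psi> f f s) \<le> mellin_tail_const (real (DIM('a) - 1)) (1 / R) s * L2sq_cone f"
proof -
  let ?C = "mellin_tail_const (real (DIM('a) - 1)) (1 / R) s"
  define t where "t d = Pd (DIM('a) - 1) d s * (\<Sum>l<N d. (cmod (mellin (fdl \<psi> f d l) s))\<^sup>2)" for d
  have n: "0 < real (DIM('a) - 1)" and s2: "real (DIM('a) - 1) < 2 * s"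
    using s by linarith+
  have t_nonneg: "0 \<le> t d" for d
    using Pd_nonneg_le_1(1)[OF s] by (simp add: t_def sum_nonneg)
  have partial_sums: "sum t {..<D} \<le> ?C * L2sq_cone f" for D
  proof -
    have "sum t {..<D} \<le> (\<Sum>d<D. \<Sum>l<N d. (cmod (mellin (fdl \<psi> f d l) s))\<^sup>2)"
      using Pd_nonneg_le_1[OF s] unfolding t_def
      by (intro sum_mono mult_left_le_one_le sum_nonneg) auto
    also have "\<dots> \<le> (\<Sum>d<D. \<Sum>l<N d. ?C * coeff_L2 d l)"
      by (intro sum_mono norm_mellin_fdl_power2_le[OF s2 n]) auto
    also have "\<dots> = ?C * (\<Sum>(d, l)\<in>Sigma {..<D} (\<lambda>d. {..<N d}). coeff_L2 d l)"
      by (simp add: sum.Sigma[symmetric] sum_distrib_left)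
    also have "\<dots> \<le> ?C * L2sq_cone f"
      using R s2 by (intro mult_left_mono sum_coeff_L2_le[OF n]) (auto simp: mellin_tail_const_def)
    finally show ?thesis .
  qed
  have summable: "summable t"
    by (rule summableI_nonneg_bounded[OF t_nonneg partial_sums])
  have "Mff N \<psi> f f s = (\<Sum>d. complex_of_real (t d))"
    unfolding Mff_def t_def of_real_mult of_real_sum complex_norm_square ..
  also have "\<dots> = complex_of_real (suminf t)"
    by (rule suminf_of_real[OF summable, symmetric])
  finally have "cmod (Mff N \<psi> f f s) = suminf t"
    using suminf_nonneg[OF summable t_nonneg] by simp
  also have "\<dots> \<le> ?C * L2sq_cone f"
    by (rule suminf_le_const[OF summable partial_sums])
  finally show ?thesis .
qed

end

theorem lemma6p3:
  fixes N :: "nat \<Rightarrow> nat" and \<psi> :: "nat \<Rightarrow> nat \<Rightarrow> 'a::euclidean_space \<Rightarrow> complex"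
    and B :: "('a \<times> real) set" and s :: real
  assumes "DIM('a) \<ge> 4"
    and "is_sph_onb N \<psi>"
    and "bounded B"
    and "real (DIM('a) - 1) / 2 < s" and "s < real (DIM('a) - 1)"
  shows "\<exists>C. \<forall>f :: 'a \<times> real \<Rightarrow> complex.
           f \<in> borel_measurable (restrict_space borel lcone) \<and>
           (\<exists>K. \<forall>x\<in>lcone. cmod (f x) \<le> K) \<and>
           {x\<in>lcone. f x \<noteq> 0} \<subseteq> B
           \<longrightarrow> cmod (Mff N \<psi> f f s) \<le> C * L2sq_cone f"
proof -
  obtain R where R: "R > 0" and RB: "\<And>x. x \<in> B \<Longrightarrow> norm x \<le> R"
    using \<open>bounded B\<close> unfolding bounded_pos by blast
  show ?thesis
  proof (intro exI[of _ "mellin_tail_const (real (DIM('a) - 1)) (1 / R) s"] allI impI, elim conjE exE)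
    fix f :: "'a \<times> real \<Rightarrow> complex" and K
    assume "f \<in> borel_measurable (restrict_space borel lcone)" "\<forall>x\<in>lcone. cmod (f x) \<le> K"
      "{x\<in>lcone. f x \<noteq> 0} \<subseteq> B"
    then interpret cone_function N \<psi> f "max K 0" R
      using \<open>is_sph_onb N \<psi>\<close> R RB by unfold_locales fastforce+
    show "cmod (Mff N \<psi> f f s) \<le> mellin_tail_const (real (DIM('a) - 1)) (1 / R) s * L2sq_cone f"
      by (rule norm_Mff_le[OF assms(4,5)])
  qed
qed

end
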